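(* Suppose (V4'), (A1) and (A4) hold. Then the ODE $\frac{d}{dt}\vartheta_t=\bar f(\vartheta_t)$ is exponentially asymptotically stable: there are positive constants $b$ and $\delta$ such that for every initial condition $\vartheta_0\in\mathbb{R}^d$, $$\|\vartheta_t-\theta^*\|\le b\|\vartheta_0-\theta^*\|e^{-\delta t},\qquad t\ge0 .$$
   Context: Setting. Fix $d,m,K\ge1$, frequencies $\omega_i>0$, phases $\phi_i$; clock process $\Phi^i_t=\exp(2\pi j[\omega_it+\phi_i])$ with $\Omega$ the closure of its orbit and $\pi$ the uniform probability on $\Omega$; probing signal $\xi_t=G(\Phi_t)$, $G(z)=G_0((z+1/z)/2)$, $G_0\colon\mathbb{R}^K\to\mathbb{R}^m$ analytic with absolutely summable Taylor coefficients. $f\colon\mathbb{R}^d\times\mathbb{R}^m\to\mathbb{R}^d$, $\bar f(\theta)=\int f(\theta,G(z))\pi(dz)$, continuously differentiable with $\bar A=\partial_\theta\bar f$; QSA ODE $\frac{d}{dt}\Theta_t=\alpha f(\Theta_t,\xi_t)$. (A1): $\|\bar f(\theta')-\bar f(\theta)\|\le L_f\|\theta'-\theta\|$ and $\|f(\theta',\xi)-f(\theta,\xi)\|+\|f(\theta,\xi')-f(\theta,\xi)\|\le L_f[\|\theta'-\theta\|+\|\xi'-\xi\|]$. (V4'): there are $V\colon\mathbb{R}^d\to\mathbb{R}_+$ and constants $L_V$, $\delta_0,\delta_1,T>0$ with $V$ $L_V$-Lipschitz, $V(\theta)\ge\|\theta\|$ when $\|\theta\|\ge\delta_0^{-1}$,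 and $V(\vartheta_{\tau+T})-V(\vartheta_\tau)\le-\delta_1\|\vartheta_\tau\|$ for every solution of $\frac{d}{dt}\vartheta=\bar f(\vartheta)$ and every $\tau\ge0$ with $\|\vartheta_\tau\|>\delta_1^{-1}$. (A4): there are $\alpha^0>0$, $B_u<\infty$ such that for every $\alpha\in(0,\alpha^0]$ and every initial $(\Theta_0,\Phi_0)$ the QSA solution satisfies $\|\Theta_t\|\le B_u$ for all large $t$; the ODE $\frac{d}{dt}\vartheta=\bar f(\vartheta)$ is globally asymptotically stable with unique equilibrium $\theta^*$; and $\bar A(\theta^* )$ is Hurwitz. *)

theory Defs
  imports "HOL-Analysis.Analysis" "HOL-Probability.Probability"
begin

definition clock :: "real^'k \<Rightarrow> real^'k \<Rightarrow> real \<Rightarrow> complex^'k" where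
  "clock w ph t = (\<chi> i. exp (2 * of_real pi * \<i> * of_real (w$i * t + ph$i)))"

definition clock_orbit :: "real^'k \<Rightarrow> real^'k \<Rightarrow> (complex^'k) set" where
  "clock_orbit w ph = closure (clock w ph ` {0..})"

definition clock_flow :: "real^'k \<Rightarrow> complex^'k \<Rightarrow> real \<Rightarrow> complex^'k" where
  "clock_flow w z t = (\<chi> i. z$i * exp (2 * of_real pi * \<i> * of_real (w$i * t)))"

text \<open>Uniform probability on Omega: a Borel probability measure concentrated on Omega
  and invariant under the clock flow (this is the Haar measure of the orbit closure).\<close>
definition uniform_on_orbit :: "real^'k \<Rightarrow> real^'k \<Rightarrow> (complex^'k) measure \<Rightarrow> bool" where
  "uniform_on_orbit w ph P \<longleftrightarrow>
     prob_space P \<and> sets P = sets borel \<and> emeasure P (clock_orbit w ph) = 1 \<and>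
     (\<forall>s. distr P borel (\<lambda>z. clock_flow w z s) = P)"

text \<open>G(z) = G0((z + 1/z)/2), the argument taken componentwise (real-valued on the torus).\<close>
definition probe :: "(real^'k \<Rightarrow> real^'m) \<Rightarrow> complex^'k \<Rightarrow> real^'m" where
  "probe G0 z = G0 (\<chi> i. Re ((z$i + inverse (z$i)) / 2))"

text \<open>G0 is given by its multivariate Taylor series (at 0) with absolutely summable
  coefficients; the expansion is required on the cube [-1,1]^K where G0 is evaluated.\<close>
definition abs_summable_taylor :: "(real^'k \<Rightarrow> real^'m) \<Rightarrow> bool" where
  "abs_summable_taylor G0 \<longleftrightarrow>
     (\<exists>c :: ('k \<Rightarrow> nat) \<Rightarrow> real^'m.
        (\<lambda>a. norm (c a)) summable_on UNIV \<and>
        (\<forall>x. (\<forall>i. \<bar>x$i\<bar> \<le> 1) \<longrightarrow>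
             ((\<lambda>a. (\<Prod>i\<in>UNIV. (x$i) ^ (a i)) *\<^sub>R c a) has_sum G0 x) UNIV))"

definition nonauto_solution :: "(real \<Rightarrow> 'a::real_normed_vector \<Rightarrow> 'a) \<Rightarrow> (real \<Rightarrow> 'a) \<Rightarrow> bool" where
  "nonauto_solution F x \<longleftrightarrow> (\<forall>t\<ge>0. (x has_vector_derivative F t (x t)) (at t within {0..}))"

definition ode_solution :: "('a::real_normed_vector \<Rightarrow> 'a) \<Rightarrow> (real \<Rightarrow> 'a) \<Rightarrow> bool" where
  "ode_solution F x \<longleftrightarrow> nonauto_solution (\<lambda>t. F) x"

definition globally_asymptotically_stable :: "('a::real_normed_vector \<Rightarrow> 'a) \<Rightarrow> 'a \<Rightarrow> bool" where
  "globally_asymptotically_stable F ts \<longleftrightarrow>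
     (\<forall>e>0. \<exists>d>0. \<forall>x. ode_solution F x \<and> norm (x 0 - ts) < d \<longrightarrow> (\<forall>t\<ge>0. norm (x t - ts) < e)) \<and>
     (\<forall>x. ode_solution F x \<longrightarrow> (x \<longlongrightarrow> ts) at_top)"

definition hurwitz :: "real^'n^'n \<Rightarrow> bool" where
  "hurwitz A \<longleftrightarrow>
     (\<forall>l::complex. det (mat l - (\<chi> i j. complex_of_real (A$i$j))) = 0 \<longrightarrow> Re l < 0)"

end

(*
  Near the equilibrium: a Schur triangularisation of the Hurwitz matrix, followed by the
  rescaling of the i-th coordinate by eps^-i, gives a linear injective S with
  <S v, S (Abar v)> <= -c |S v|^2.  Lyapunov stability keeps solutions started close to
  theta_s in the region where the linearisation dominates, and there |S (x t - theta_s)|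
  decays like exp (-c t / 2).

  Far away: by the drift condition (V4') the value of V along the sampled times k T
  contracts geometrically until it reaches a bounded set; Gronwall's inequality between the
  sample times gives |x t - theta_s| <= R + C |x 0 - theta_s| exp (-gamma t).

  Gluing: attractivity and compactness give a uniform time after which every solution
  started in a bounded set has entered the local ball.  A solution started far away thus
  enters it after a time sigma with exp (gamma sigma) linear in |x 0 - theta_s|, and this
  factor is absorbed into the constant b.
*)
theory Submission
  imports Defs "Jordan_Normal_Form.Schur_Decomposition"
begin

no_notation Matrix.vec_index (infixl "$" 100)
no_notation Matrix.scalar_prod (infix "\<bullet>" 70)

section \<open>Solutions of autonomous ODEs\<close>

lemma ode_solution_continuous_on: "ode_solution F x \<Longrightarrow> continuous_on {0..} x"
  unfolding ode_solution_def nonauto_solution_def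
  by (rule continuous_on_vector_derivative) auto

lemma ode_solution_has_vector_derivative_at:
  assumes "ode_solution F x" "0 < t"
  shows "(x has_vector_derivative F (x t)) (at t)"
proof -
  have "(x has_vector_derivative F (x t)) (at t within {0..})"
    using assms unfolding ode_solution_def nonauto_solution_def by simp
  then have "(x has_vector_derivative F (x t)) (at t within {0<..})"
    by (rule has_vector_derivative_within_subset) auto
  then show ?thesis
    using assms(2) by (subst (asm) has_vector_derivative_within_open) auto
qed

lemma ode_solution_shift:
  assumes "ode_solution F x" "0 \<le> s"
  shows "ode_solution F (\<lambda>t. x (t + s))"
  unfolding ode_solution_def nonauto_solution_def
proof (intro allI impI)
  fix t :: real assume "0 \<le> t"
  then have "(x has_vector_derivative F (x (t + s))) (at (t + s) within {0..})"
    using assms unfolding ode_solution_def nonauto_solution_def by simp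
  then have "(x has_vector_derivative F (x (t + s))) (at (t + s) within (\<lambda>u. u + s) ` {0..})"
    by (rule has_vector_derivative_within_subset) (use assms in auto)
  moreover have "((\<lambda>u. u + s) has_vector_derivative 1) (at t within {0..})"
    by (auto intro!: derivative_eq_intros)
  ultimately show "((\<lambda>t. x (t + s)) has_vector_derivative F (x (t + s))) (at t within {0..})"
    using vector_diff_chain_within by (fastforce simp: o_def)
qed

lemma ode_solution_const: "F c = 0 \<Longrightarrow> ode_solution F (\<lambda>t. c)"
  unfolding ode_solution_def nonauto_solution_def by (auto intro!: derivative_eq_intros)

lemma norm_le_exp_if_inner_derivative_le:
  fixes z :: "real \<Rightarrow> 'a::real_inner"
  assumes cont: "continuous_on {0..t} z"
    and deriv: "\<And>u. 0 < u \<Longrightarrow> u < t \<Longrightarrow> (z has_vector_derivative z' u) (at u)"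
    and inner_le: "\<And>u. 0 < u \<Longrightarrow> u < t \<Longrightarrow> inner (z u) (z' u) \<le> k * (norm (z u))\<^sup>2"
    and "0 \<le> t"
  shows "norm (z t) \<le> norm (z 0) * exp (k * t)"
proof -
  define \<phi> where "\<phi> u = (norm (z u))\<^sup>2 * exp (- (2 * k) * u)" for u
  have "\<phi> t \<le> \<phi> 0"
  proof (rule DERIV_nonpos_imp_decreasing_open[OF \<open>0 \<le> t\<close>])
    show "continuous_on {0..t} \<phi>"
      unfolding \<phi>_def using cont by (auto intro!: continuous_intros)
  next
    fix u assume u: "0 < u" "u < t"
    have "(\<phi> has_real_derivative
        2 * exp (- (2 * k) * u) * (inner (z u) (z' u) - k * (norm (z u))\<^sup>2)) (at u)"
      using deriv[OF u] unfolding \<phi>_def power2_norm_eq_inner has_vector_derivative_def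
        has_field_derivative_def
      by (auto intro!: derivative_eq_intros simp: algebra_simps inner_commute)
    moreover have "2 * exp (- (2 * k) * u) * (inner (z u) (z' u) - k * (norm (z u))\<^sup>2) \<le> 0"
      using inner_le[OF u] by (intro mult_nonneg_nonpos) auto
    ultimately show "\<exists>y. (\<phi> has_real_derivative y) (at u) \<and> y \<le> 0" by blast
  qed
  have "(norm (z t))\<^sup>2 = \<phi> t * exp (k * t + k * t)"
    by (simp add: \<phi>_def mult.assoc flip: exp_add)
  also have "\<dots> \<le> \<phi> 0 * exp (k * t + k * t)"
    using \<open>\<phi> t \<le> \<phi> 0\<close> by (rule mult_right_mono) simp
  also have "\<dots> = (norm (z 0) * exp (k * t))\<^sup>2"
    by (simp add: \<phi>_def power_mult_distrib power2_eq_square flip: exp_add)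
  finally have "(norm (z t))\<^sup>2 \<le> (norm (z 0) * exp (k * t))\<^sup>2" .
  then show ?thesis
    by (rule power2_le_imp_le) simp
qed

lemma ode_solution_dist_le:
  fixes F :: "'a::real_inner \<Rightarrow> 'a"
  assumes lip: "L-lipschitz_on UNIV F"
    and x: "ode_solution F x" and y: "ode_solution F y" and "0 \<le> t"
  shows "norm (x t - y t) \<le> norm (x 0 - y 0) * exp (L * t)"
proof (rule norm_le_exp_if_inner_derivative_le[where z' = "\<lambda>u. F (x u) - F (y u)"])
  show "continuous_on {0..t} (\<lambda>u. x u - y u)"
    using continuous_on_subset[OF ode_solution_continuous_on[OF x], of "{0..t}"]
      continuous_on_subset[OF ode_solution_continuous_on[OF y], of "{0..t}"]
    by (auto intro!: continuous_intros)
next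
  fix u :: real assume "0 < u"
  then show "((\<lambda>u. x u - y u) has_vector_derivative F (x u) - F (y u)) (at u)"
    using ode_solution_has_vector_derivative_at[OF x] ode_solution_has_vector_derivative_at[OF y]
    by (auto intro!: derivative_intros)
  have "inner (x u - y u) (F (x u) - F (y u)) \<le> norm (x u - y u) * norm (F (x u) - F (y u))"
    by (rule norm_cauchy_schwarz)
  also have "\<dots> \<le> norm (x u - y u) * (L * norm (x u - y u))"
    using lipschitz_onD[OF lip UNIV_I UNIV_I] by (intro mult_left_mono) (simp_all add: dist_norm)
  finally show "inner (x u - y u) (F (x u) - F (y u)) \<le> L * (norm (x u - y u))\<^sup>2"
    by (simp add: power2_eq_square algebra_simps)
qed fact

lemma ode_solution_dist_equilibrium_le:
  fixes F :: "'a::real_inner \<Rightarrow> 'a"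
  assumes "L-lipschitz_on UNIV F" "ode_solution F x" "F c = 0" "0 \<le> s" "0 \<le> t"
  shows "norm (x (s + t) - c) \<le> norm (x s - c) * exp (L * t)"
  using ode_solution_dist_le[OF assms(1) ode_solution_shift[OF assms(2,4)] ode_solution_const assms(5)]
    assms(3) by (simp add: add.commute)

lemma ode_solutions_limit_exists:
  fixes F :: "'a::{real_inner,banach} \<Rightarrow> 'a"
  assumes lip: "L-lipschitz_on UNIV F"
    and xs: "\<And>n. ode_solution F (xs n)" and conv: "(\<lambda>n. xs n 0) \<longlonglongrightarrow> y0"
  obtains y where "\<And>n t. 0 \<le> t \<Longrightarrow> norm (xs n t - y t) \<le> norm (xs n 0 - y0) * exp (L * t)"
proof -
  have dist_le: "norm (xs n t - xs m t) \<le> norm (xs n 0 - xs m 0) * exp (L * t)"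
    if "0 \<le> t" for n m t
    using ode_solution_dist_le[OF lip xs xs that] .
  have "Cauchy (\<lambda>n. xs n t)" if t: "0 \<le> t" for t
  proof (rule metric_CauchyI)
    fix e :: real assume "0 < e"
    then obtain M where M: "\<forall>m\<ge>M. \<forall>n\<ge>M. dist (xs m 0) (xs n 0) < e / exp (L * t)"
      using metric_CauchyD[OF LIMSEQ_imp_Cauchy[OF conv]] by (metis divide_pos_pos exp_gt_zero)
    have "dist (xs m t) (xs n t) < e" if "M \<le> m" "M \<le> n" for m n
    proof -
      have "dist (xs m t) (xs n t) \<le> dist (xs m 0) (xs n 0) * exp (L * t)"
        using dist_le[OF t] by (simp add: dist_norm)
      also have "\<dots> < e / exp (L * t) * exp (L * t)"
        using M that by (intro mult_strict_right_mono) auto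
      finally show ?thesis by simp
    qed
    then show "\<exists>M. \<forall>m\<ge>M. \<forall>n\<ge>M. dist (xs m t) (xs n t) < e" by blast
  qed
  then obtain y where y: "\<And>t. 0 \<le> t \<Longrightarrow> (\<lambda>n. xs n t) \<longlonglongrightarrow> y t"
    unfolding Cauchy_convergent_iff convergent_def by metis
  show thesis
  proof
    fix n :: nat and t :: real assume t: "0 \<le> t"
    show "norm (xs n t - y t) \<le> norm (xs n 0 - y0) * exp (L * t)"
    proof (rule LIMSEQ_le)
      show "(\<lambda>m. norm (xs n t - xs m t)) \<longlonglongrightarrow> norm (xs n t - y t)"
        by (intro tendsto_intros y t)
      show "(\<lambda>m. norm (xs n 0 - xs m 0) * exp (L * t)) \<longlonglongrightarrow> norm (xs n 0 - y0) * exp (L * t)"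
        by (intro tendsto_intros conv)
    qed (use dist_le[OF t] in blast)
  qed
qed

lemma ode_solutions_vector_field_converge:
  fixes F :: "'a::real_normed_vector \<Rightarrow> 'a"
  assumes lip: "L-lipschitz_on UNIV F" and conv: "(\<lambda>n. xs n 0) \<longlonglongrightarrow> y0"
    and bound: "\<And>n t. 0 \<le> t \<Longrightarrow> norm (xs n t - y t) \<le> norm (xs n 0 - y0) * exp (L * t)"
    and "0 < e"
  shows "\<forall>\<^sub>F n in sequentially. \<forall>u\<in>{0..N}. norm (F (xs n u) - F (y u)) \<le> e"
proof -
  have "0 \<le> L"
    using lip by (rule lipschitz_on_nonneg)
  have "(\<lambda>n. L * (norm (xs n 0 - y0) * exp (L * N))) \<longlonglongrightarrow> 0"
    by (intro tendsto_mult_right_zero tendsto_mult_left_zero tendsto_norm_zero LIM_zero conv)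
  then have "\<forall>\<^sub>F n in sequentially. L * (norm (xs n 0 - y0) * exp (L * N)) < e"
    using \<open>0 < e\<close> by (rule order_tendstoD)
  then show ?thesis
  proof eventually_elim
    case (elim n)
    show ?case
    proof
      fix u assume u: "u \<in> {0..N}"
      have "norm (F (xs n u) - F (y u)) \<le> L * norm (xs n u - y u)"
        using lipschitz_onD[OF lip UNIV_I UNIV_I] by (simp add: dist_norm)
      also have "\<dots> \<le> L * (norm (xs n 0 - y0) * exp (L * N))"
      proof (rule mult_left_mono)
        have "norm (xs n u - y u) \<le> norm (xs n 0 - y0) * exp (L * u)"
          using bound u by simp
        also have "\<dots> \<le> norm (xs n 0 - y0) * exp (L * N)"
          using u \<open>0 \<le> L\<close> by (intro mult_left_mono) (auto intro: mult_left_mono)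
        finally show "norm (xs n u - y u) \<le> norm (xs n 0 - y0) * exp (L * N)" .
      qed fact
      finally show "norm (F (xs n u) - F (y u)) \<le> e"
        using elim by simp
    qed
  qed
qed

lemma ode_solution_of_limit:
  fixes F :: "'a::{real_inner,banach} \<Rightarrow> 'a"
  assumes lip: "L-lipschitz_on UNIV F"
    and xs: "\<And>n. ode_solution F (xs n)" and conv: "(\<lambda>n. xs n 0) \<longlonglongrightarrow> y0"
    and bound: "\<And>n t. 0 \<le> t \<Longrightarrow> norm (xs n t - y t) \<le> norm (xs n 0 - y0) * exp (L * t)"
  shows "ode_solution F y"
  unfolding ode_solution_def nonauto_solution_def
proof (intro allI impI)
  fix t :: real assume "0 \<le> t"
  define N where "N = t + 1"
  have deriv_xs: "(xs n has_derivative (\<lambda>h. h *\<^sub>R F (xs n u))) (at u within {0..N})"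
    if "u \<in> {0..N}" for n u
  proof -
    have "(xs n has_vector_derivative F (xs n u)) (at u within {0..})"
      using xs[of n] that unfolding ode_solution_def nonauto_solution_def by auto
    then show ?thesis
      unfolding has_vector_derivative_def by (rule has_derivative_subset) auto
  qed
  have deriv_conv: "\<forall>\<^sub>F n in sequentially. \<forall>u\<in>{0..N}. \<forall>h.
      norm (h *\<^sub>R F (xs n u) - h *\<^sub>R F (y u)) \<le> e * norm h" if "0 < e" for e
  proof -
    have "\<forall>\<^sub>F n in sequentially. \<forall>u\<in>{0..N}. norm (F (xs n u) - F (y u)) \<le> e"
      by (rule ode_solutions_vector_field_converge[where xs = xs and y = y, OF lip conv _ that])
        (rule bound)
    then show ?thesis
    proof eventually_elim
      case (elim n)
      have "\<bar>h\<bar> * norm (F (xs n u) - F (y u)) \<le> \<bar>h\<bar> * e" if "u \<in> {0..N}" for u h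
        using elim that by (intro mult_left_mono) auto
      then show ?case
        by (simp add: mult.commute flip: scaleR_diff_right)
    qed
  qed
  obtain g where g: "\<And>u. u \<in> {0..N} \<Longrightarrow> (\<lambda>n. xs n u) \<longlonglongrightarrow> g u"
    "\<And>u. u \<in> {0..N} \<Longrightarrow> (g has_derivative (\<lambda>h. h *\<^sub>R F (y u))) (at u within {0..N})"
    using has_derivative_sequence[OF convex_real_interval(5) deriv_xs deriv_conv _ conv] \<open>0 \<le> t\<close>
    by (fastforce simp: N_def)
  have "(\<lambda>n. xs n u) \<longlonglongrightarrow> y u" if "0 \<le> u" for u
  proof -
    have "(\<lambda>n. xs n u - y u) \<longlonglongrightarrow> 0"
      by (rule Lim_null_comparison[OF always_eventually[OF allI[OF bound[OF that]]]])
        (intro tendsto_mult_left_zero tendsto_norm_zero LIM_zero conv)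
    then show ?thesis by (simp add: LIM_zero_iff)
  qed
  then have "y u = g u" if "u \<in> {0..N}" for u
    using g(1)[OF that] that by (auto intro: LIMSEQ_unique)
  moreover have t: "t \<in> {0..N}"
    using \<open>0 \<le> t\<close> by (simp add: N_def)
  ultimately have "(y has_derivative (\<lambda>h. h *\<^sub>R F (y t))) (at t within {0..N})"
    by (intro has_derivative_transform[OF t _ g(2)[OF t]])
  moreover have "at t within {0..N} = at t within {0..}"
    by (rule at_within_nhd[of _ "{..<N}"]) (auto simp: N_def)
  ultimately show "(y has_vector_derivative F (y t)) (at t within {0..})"
    by (simp add: has_vector_derivative_def)
qed

(* Otherwise initial values of solutions avoiding the ball up to time n accumulate, and the
   solution through the limit point, which is attracted to ts, is approximated by them. *)
lemma ode_uniform_entry_time: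
  fixes F :: "'a::euclidean_space \<Rightarrow> 'a"
  assumes lip: "L-lipschitz_on UNIV F"
    and attractive: "\<And>x. ode_solution F x \<Longrightarrow> (x \<longlongrightarrow> ts) at_top"
    and "0 < d"
  obtains T where "\<And>x. ode_solution F x \<Longrightarrow> norm (x 0 - ts) \<le> R \<Longrightarrow> \<exists>s\<in>{0..T}. norm (x s - ts) < d"
proof (rule ccontr)
  assume "\<not> thesis"
  then have "\<forall>n::nat. \<exists>x. ode_solution F x \<and> norm (x 0 - ts) \<le> R \<and> (\<forall>s\<in>{0..real n}. d \<le> norm (x s - ts))"
    using that by (meson not_le)
  then obtain xs where xs: "\<And>n. ode_solution F (xs n)" "\<And>n. xs n 0 \<in> cball ts R"
    and far: "\<And>n s. s \<in> {0..real n} \<Longrightarrow> d \<le> norm (xs n s - ts)"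
    by (metis mem_cball dist_norm norm_minus_commute)
  obtain r y0 where r: "strict_mono r" and conv: "((\<lambda>n. xs n 0) \<circ> r) \<longlonglongrightarrow> y0"
    using compact_cball[THEN compact_imp_seq_compact, unfolded seq_compact_def] xs(2) by metis
  obtain y where bound: "\<And>n t. 0 \<le> t \<Longrightarrow> norm (xs (r n) t - y t) \<le> norm (xs (r n) 0 - y0) * exp (L * t)"
    using ode_solutions_limit_exists[OF lip xs(1) conv[unfolded o_def]] by metis
  have "ode_solution F y"
    using ode_solution_of_limit[OF lip xs(1) conv[unfolded o_def] bound] .
  then have "\<forall>\<^sub>F t in at_top. dist (y t) ts < d / 2"
    using attractive \<open>0 < d\<close> unfolding tendsto_iff by (meson half_gt_zero)
  then obtain t where t: "0 \<le> t" "dist (y t) ts < d / 2"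
    by (metis eventually_at_top_linorder max.cobounded1 max.cobounded2)
  have "(\<lambda>n. norm (xs (r n) 0 - y0) * exp (L * t)) \<longlonglongrightarrow> 0"
    using conv by (intro tendsto_mult_left_zero tendsto_norm_zero LIM_zero) (simp add: o_def)
  then have "\<forall>\<^sub>F n in sequentially. norm (xs (r n) 0 - y0) * exp (L * t) < d / 2"
    by (rule order_tendstoD) (use \<open>0 < d\<close> in simp)
  moreover have "\<forall>\<^sub>F n in sequentially. t \<le> real (r n)"
  proof -
    obtain k :: nat where k: "t \<le> real k"
      using real_arch_simple by blast
    have "t \<le> real (r n)" if "k \<le> n" for n
    proof -
      have "real k \<le> real (r n)"
        using seq_suble[OF r, of n] that by simp
      then show ?thesis using k by linarith
    qed
    then show ?thesis
      by (auto simp: eventually_sequentially)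
  qed
  ultimately have "\<forall>\<^sub>F n in sequentially. norm (xs (r n) 0 - y0) * exp (L * t) < d / 2 \<and> t \<le> real (r n)"
    by (rule eventually_conj)
  then obtain n where n: "norm (xs (r n) 0 - y0) * exp (L * t) < d / 2" "t \<le> real (r n)"
    unfolding eventually_sequentially by blast
  have "d \<le> norm (xs (r n) t - ts)"
    using far n(2) t(1) by simp
  also have "\<dots> \<le> norm (xs (r n) t - y t) + dist (y t) ts"
    using norm_triangle_ineq[of "xs (r n) t - y t" "y t - ts"] by (simp add: dist_norm)
  also have "\<dots> < d"
    using bound[OF t(1), of n] n(1) t(2) by linarith
  finally show False by simp
qed

section \<open>Ultimate bound from the drift condition\<close>

(* Where |x| >= K we have V x <= 2 b |x|, so the drift removes at least the fraction
   kappa = delta1 / (2 b) of V; where |x| < K, Gronwall bounds V after time T by B. *)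
lemma drift_contraction:
  fixes F :: "'a::real_inner \<Rightarrow> 'a" and V :: "'a \<Rightarrow> real"
  assumes lip: "L-lipschitz_on UNIV F" and F0: "F ts = 0"
    and V_nonneg: "\<And>\<theta>. 0 \<le> V \<theta>" and V_growth: "\<And>\<theta>. V \<theta> \<le> a + b * norm \<theta>" and "0 < b"
    and "0 < \<delta>1" "0 \<le> T"
    and drift: "\<And>x \<tau>. ode_solution F x \<Longrightarrow> 0 \<le> \<tau> \<Longrightarrow> 1 / \<delta>1 < norm (x \<tau>) \<Longrightarrow>
                  V (x (\<tau> + T)) - V (x \<tau>) \<le> - \<delta>1 * norm (x \<tau>)"
  obtains q B where "0 < q" "q < 1" "0 \<le> B"
    and "\<And>x \<tau>. ode_solution F x \<Longrightarrow> 0 \<le> \<tau> \<Longrightarrow> V (x (\<tau> + T)) \<le> max (q * V (x \<tau>)) B"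
proof -
  have "0 \<le> a"
    using V_nonneg[of 0] V_growth[of 0] by simp
  define K where "K = 1 / \<delta>1 + a / b + 1"
  define \<kappa> where "\<kappa> = \<delta>1 / (2 * b)"
  define q where "q = max (1 - \<kappa>) (1 / 2)"
  define B where "B = a + b * (norm ts + (K + norm ts) * exp (L * T))"
  have "0 < \<kappa>"
    using \<open>0 < \<delta>1\<close> \<open>0 < b\<close> by (simp add: \<kappa>_def)
  then have q: "0 < q" "q < 1"
    by (auto simp: q_def)
  have "0 \<le> a / b"
    using \<open>0 \<le> a\<close> \<open>0 < b\<close> by simp
  then have "0 < K"
    using \<open>0 < \<delta>1\<close> by (simp add: K_def add_pos_nonneg)
  then have "0 \<le> B"
    using \<open>0 \<le> a\<close> \<open>0 < b\<close> by (simp add: B_def)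
  have "V (x (\<tau> + T)) \<le> max (q * V (x \<tau>)) B" if x: "ode_solution F x" and "0 \<le> \<tau>" for x \<tau>
  proof (cases "K \<le> norm (x \<tau>)")
    case True
    have "0 < 1 / \<delta>1"
      using \<open>0 < \<delta>1\<close> by simp
    then have "a / b \<le> norm (x \<tau>)"
      using True unfolding K_def by linarith
    then have "a \<le> b * norm (x \<tau>)"
      using \<open>0 < b\<close> by (simp add: pos_divide_le_eq mult.commute)
    then have "\<kappa> * V (x \<tau>) \<le> \<kappa> * (2 * b * norm (x \<tau>))"
      using V_growth[of "x \<tau>"] \<open>0 < \<kappa>\<close> by (intro mult_left_mono) auto
    also have "\<dots> = \<delta>1 * norm (x \<tau>)"
      using \<open>0 < b\<close> by (simp add: \<kappa>_def)
    finally have "V (x (\<tau> + T)) \<le> (1 - \<kappa>) * V (x \<tau>)"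
      using drift[OF x \<open>0 \<le> \<tau>\<close>] True \<open>0 \<le> a / b\<close> by (simp add: K_def algebra_simps)
    also have "\<dots> \<le> q * V (x \<tau>)"
      using V_nonneg by (intro mult_right_mono) (auto simp: q_def)
    finally show ?thesis by simp
  next
    case False
    have "norm (x (\<tau> + T) - ts) \<le> norm (x \<tau> - ts) * exp (L * T)"
      using ode_solution_dist_equilibrium_le[OF lip x F0 \<open>0 \<le> \<tau>\<close> \<open>0 \<le> T\<close>] .
    also have "\<dots> \<le> (K + norm ts) * exp (L * T)"
      using False norm_triangle_ineq4[of "x \<tau>" ts] by (intro mult_right_mono) auto
    finally have "norm (x (\<tau> + T)) \<le> norm ts + (K + norm ts) * exp (L * T)"
      using norm_triangle_ineq2[of "x (\<tau> + T)" ts] by linarith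
    then have "V (x (\<tau> + T)) \<le> B"
      using V_growth[of "x (\<tau> + T)"] \<open>0 < b\<close> unfolding B_def
      by (smt (verit) mult_left_mono)
    then show ?thesis by simp
  qed
  with q \<open>0 \<le> B\<close> that show thesis by blast
qed

lemma max_contraction_iterate:
  fixes g :: "real \<Rightarrow> real"
  assumes step: "\<And>\<tau>. 0 \<le> \<tau> \<Longrightarrow> g (\<tau> + T) \<le> max (q * g \<tau>) B"
    and "0 \<le> q" "q \<le> 1" "0 \<le> B" "0 \<le> T"
  shows "g (real k * T) \<le> max (q ^ k * g 0) B"
proof (induction k)
  case 0
  then show ?case by simp
next
  case (Suc k)
  have "g (real (Suc k) * T) \<le> max (q * g (real k * T)) B"
    using step[of "real k * T"] \<open>0 \<le> T\<close> by (simp add: algebra_simps)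
  also have "\<dots> \<le> max (q * max (q ^ k * g 0) B) B"
    using Suc.IH \<open>0 \<le> q\<close> by (intro max.mono mult_left_mono) auto
  also have "\<dots> \<le> max (q ^ Suc k * g 0) B"
    using mult_left_le_one_le[OF \<open>0 \<le> B\<close> \<open>0 \<le> q\<close> \<open>q \<le> 1\<close>] \<open>0 \<le> q\<close>
    by (auto simp: max_def algebra_simps)
  finally show ?case .
qed

lemma power_nat_floor_le_exp:
  fixes q T t :: real
  assumes "0 < q" "q < 1" "0 < T" "0 \<le> t"
  shows "q ^ nat \<lfloor>t / T\<rfloor> \<le> exp (ln q / T * t) / q"
proof -
  define k where "k = nat \<lfloor>t / T\<rfloor>"
  have "t / T - 1 \<le> real k"
    using assms(3,4) unfolding k_def by linarith
  then have "real k * ln q \<le> (t / T - 1) * ln q"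
    using assms(1,2) by (intro mult_right_mono_neg) auto
  moreover have "q ^ k = exp (real k * ln q)"
    using assms(1) by (simp add: exp_of_nat_mult)
  ultimately have "q ^ k \<le> exp ((t / T - 1) * ln q)"
    by simp
  also have "(t / T - 1) * ln q = ln q / T * t - ln q"
    using assms(3) by (simp add: field_simps)
  also have "exp (ln q / T * t - ln q) = exp (ln q / T * t) / q"
    using assms(1) by (simp add: exp_diff)
  finally show ?thesis
    by (simp add: k_def)
qed

lemma drift_sampled_bound:
  fixes x :: "real \<Rightarrow> 'a::real_normed_vector" and V :: "'a \<Rightarrow> real"
  assumes V_nonneg: "\<And>\<theta>. 0 \<le> V \<theta>" and V_growth: "\<And>\<theta>. V \<theta> \<le> a + b * norm \<theta>" and "0 < b"
    and "0 < \<delta>0" and coercive: "\<And>\<theta>. 1 / \<delta>0 \<le> norm \<theta> \<Longrightarrow> norm \<theta> \<le> V \<theta>"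
    and step: "\<And>\<tau>. 0 \<le> \<tau> \<Longrightarrow> V (x (\<tau> + T)) \<le> max (q * V (x \<tau>)) B"
    and "0 \<le> q" "q \<le> 1" "0 \<le> B" "0 \<le> T"
  shows "norm (x (real k * T) - ts) \<le>
           norm ts + 1 / \<delta>0 + B + a + b * norm ts + q ^ k * (b * norm (x 0 - ts))"
proof -
  have "0 \<le> a"
    using V_nonneg[of 0] V_growth[of 0] by simp
  have "0 < 1 / \<delta>0"
    using \<open>0 < \<delta>0\<close> by simp
  have "0 \<le> q ^ k" "q ^ k \<le> 1"
    using \<open>0 \<le> q\<close> \<open>q \<le> 1\<close> by (auto intro: power_le_one)
  have "V (x 0) \<le> a + b * norm ts + b * norm (x 0 - ts)"
    using V_growth[of "x 0"] norm_triangle_ineq2[of "x 0" ts] \<open>0 < b\<close>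
    by (smt (verit) distrib_left mult_left_mono)
  then have "q ^ k * V (x 0) \<le> q ^ k * (a + b * norm ts + b * norm (x 0 - ts))"
    using \<open>0 \<le> q ^ k\<close> by (rule mult_left_mono)
  then have "q ^ k * V (x 0) \<le> q ^ k * (a + b * norm ts) + q ^ k * (b * norm (x 0 - ts))"
    by (simp add: distrib_left)
  moreover have "q ^ k * (a + b * norm ts) \<le> a + b * norm ts"
    using \<open>0 \<le> a\<close> \<open>0 < b\<close> \<open>0 \<le> q ^ k\<close> \<open>q ^ k \<le> 1\<close> by (intro mult_left_le_one_le) auto
  ultimately have V0: "q ^ k * V (x 0) \<le> a + b * norm ts + q ^ k * (b * norm (x 0 - ts))"
    by linarith
  have "norm (x (real k * T)) \<le> 1 / \<delta>0 + V (x (real k * T))"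
  proof (cases "1 / \<delta>0 \<le> norm (x (real k * T))")
    case True
    then show ?thesis
      using coercive[OF True] \<open>0 < 1 / \<delta>0\<close> by linarith
  next
    case False
    then show ?thesis
      using V_nonneg[of "x (real k * T)"] by linarith
  qed
  also have "V (x (real k * T)) \<le> max (q ^ k * V (x 0)) B"
    by (rule max_contraction_iterate[where g = "\<lambda>\<tau>. V (x \<tau>)"])
      (use step \<open>0 \<le> q\<close> \<open>q \<le> 1\<close> \<open>0 \<le> B\<close> \<open>0 \<le> T\<close> in auto)
  also have "\<dots> \<le> B + q ^ k * V (x 0)"
    using \<open>0 \<le> B\<close> \<open>0 \<le> q ^ k\<close> V_nonneg[of "x 0"] by simp
  finally show ?thesis
    using V0 norm_triangle_ineq4[of "x (real k * T)" ts] by simp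
qed

lemma drift_ultimate_bound:
  fixes F :: "'a::real_inner \<Rightarrow> 'a" and V :: "'a \<Rightarrow> real"
  assumes lip: "L-lipschitz_on UNIV F" and F0: "F ts = 0"
    and V_nonneg: "\<And>\<theta>. 0 \<le> V \<theta>" and V_growth: "\<And>\<theta>. V \<theta> \<le> a + b * norm \<theta>" and "0 < b"
    and "0 < \<delta>0" "0 < \<delta>1" "0 < T"
    and coercive: "\<And>\<theta>. 1 / \<delta>0 \<le> norm \<theta> \<Longrightarrow> norm \<theta> \<le> V \<theta>"
    and drift: "\<And>x \<tau>. ode_solution F x \<Longrightarrow> 0 \<le> \<tau> \<Longrightarrow> 1 / \<delta>1 < norm (x \<tau>) \<Longrightarrow>
                  V (x (\<tau> + T)) - V (x \<tau>) \<le> - \<delta>1 * norm (x \<tau>)"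
  obtains R C \<gamma> where "0 \<le> R" "0 \<le> C" "0 < \<gamma>"
    and "\<And>x t. ode_solution F x \<Longrightarrow> 0 \<le> t \<Longrightarrow>
           norm (x t - ts) \<le> R + C * norm (x 0 - ts) * exp (- \<gamma> * t)"
proof -
  obtain q B where q: "0 < q" "q < 1" and "0 \<le> B"
    and step: "\<And>x \<tau>. ode_solution F x \<Longrightarrow> 0 \<le> \<tau> \<Longrightarrow> V (x (\<tau> + T)) \<le> max (q * V (x \<tau>)) B"
    using drift_contraction[OF lip F0 V_nonneg V_growth \<open>0 < b\<close> \<open>0 < \<delta>1\<close> less_imp_le[OF \<open>0 < T\<close>]]
      drift by blast
  have "0 \<le> L"
    using lip by (rule lipschitz_on_nonneg)
  define \<gamma> where "\<gamma> = - ln q / T"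
  define R where "R = exp (L * T) * (norm ts + 1 / \<delta>0 + B + a + b * norm ts)"
  define C where "C = exp (L * T) * b / q"
  have "norm (x t - ts) \<le> R + C * norm (x 0 - ts) * exp (- \<gamma> * t)"
    if x: "ode_solution F x" and "0 \<le> t" for x t
  proof -
    define k where "k = nat \<lfloor>t / T\<rfloor>"
    define s where "s = t - real k * T"
    have "real k = of_int \<lfloor>t / T\<rfloor>"
      using \<open>0 \<le> t\<close> \<open>0 < T\<close> by (simp add: k_def)
    then have "real k \<le> t / T" "t / T < real k + 1"
      by (simp_all add: of_int_floor_le real_of_int_floor_add_one_gt)
    then have s: "0 \<le> s" "s \<le> T" "0 \<le> real k * T"
      using \<open>0 < T\<close> by (auto simp: s_def field_simps)
    have "norm (x t - ts) \<le> norm (x (real k * T) - ts) * exp (L * s)"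
      using ode_solution_dist_equilibrium_le[OF lip x F0 s(3,1)] by (simp add: s_def)
    also have "\<dots> \<le> norm (x (real k * T) - ts) * exp (L * T)"
      using s \<open>0 \<le> L\<close> by (intro mult_left_mono) (auto intro: mult_left_mono)
    also have "\<dots> \<le> R + exp (L * T) * q ^ k * (b * norm (x 0 - ts))"
    proof -
      have "norm (x (real k * T) - ts) \<le>
          norm ts + 1 / \<delta>0 + B + a + b * norm ts + q ^ k * (b * norm (x 0 - ts))"
        by (rule drift_sampled_bound[where x = x and V = V and a = a and b = b])
          (use V_nonneg V_growth coercive step[OF x] q \<open>0 \<le> B\<close> \<open>0 < T\<close> \<open>0 < b\<close> \<open>0 < \<delta>0\<close> in auto)
      from mult_right_mono[OF this, of "exp (L * T)"] show ?thesis
        by (simp add: R_def algebra_simps)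
    qed
    also have "\<dots> \<le> R + exp (L * T) * (exp (- \<gamma> * t) / q) * (b * norm (x 0 - ts))"
      using power_nat_floor_le_exp[OF q \<open>0 < T\<close> \<open>0 \<le> t\<close>] \<open>0 < b\<close>
      by (intro add_left_mono mult_right_mono mult_left_mono) (auto simp: k_def \<gamma>_def)
    also have "\<dots> = R + C * norm (x 0 - ts) * exp (- \<gamma> * t)"
      by (simp add: C_def)
    finally show ?thesis .
  qed
  moreover have "0 \<le> R" "0 \<le> C" "0 < \<gamma>"
    using \<open>0 \<le> B\<close> V_nonneg[of 0] V_growth[of 0] \<open>0 < b\<close> \<open>0 < \<delta>0\<close> \<open>0 < T\<close> q
    by (auto simp: R_def C_def \<gamma>_def divide_neg_pos)
  ultimately show thesis
    using that by blast
qed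

section \<open>Local exponential stability\<close>

lemma linearization_dissipative_near:
  fixes F :: "'a::euclidean_space \<Rightarrow> 'a" and S :: "'a \<Rightarrow> 'b::euclidean_space"
  assumes deriv: "(F has_derivative A) (at ts)" and "F ts = 0"
    and S: "linear S" "inj S"
    and "0 < c" and dissipative: "\<And>v. inner (S v) (S (A v)) \<le> - c * (norm (S v))\<^sup>2"
  obtains \<rho> where "0 < \<rho>"
    and "\<And>y. norm (y - ts) < \<rho> \<Longrightarrow> inner (S (y - ts)) (S (F y)) \<le> - (c / 2) * (norm (S (y - ts)))\<^sup>2"
proof -
  obtain M where "0 < M" and upper: "\<And>v. norm (S v) \<le> M * norm v"
    using linear_bounded_pos[OF S(1)] by blast
  obtain m where "0 < m" and lower: "\<And>v. m * norm v \<le> norm (S v)"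
    using linear_inj_bounded_below_pos[OF S] by blast
  define \<eta> where "\<eta> = c * m / (2 * M)"
  have "0 < \<eta>"
    using \<open>0 < c\<close> \<open>0 < m\<close> \<open>0 < M\<close> by (simp add: \<eta>_def)
  then obtain \<rho> where "0 < \<rho>"
    and remainder: "\<And>y. norm (y - ts) < \<rho> \<Longrightarrow> norm (F y - F ts - A (y - ts)) \<le> \<eta> * norm (y - ts)"
    using deriv unfolding has_derivative_at_alt by blast
  have "inner (S (y - ts)) (S (F y)) \<le> - (c / 2) * (norm (S (y - ts)))\<^sup>2"
    if "norm (y - ts) < \<rho>" for y
  proof -
    define e where "e = y - ts"
    define r where "r = F y - A e"
    have "norm r \<le> \<eta> * norm e"
      using remainder[OF that] \<open>F ts = 0\<close> by (simp add: r_def e_def)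
    have "inner (S e) (S r) \<le> norm (S e) * norm (S r)"
      by (rule norm_cauchy_schwarz)
    also have "\<dots> \<le> norm (S e) * (M * (\<eta> * (norm (S e) / m)))"
    proof (intro mult_left_mono)
      have "norm e \<le> norm (S e) / m"
        using lower[of e] \<open>0 < m\<close> by (simp add: field_simps)
      then show "norm (S r) \<le> M * (\<eta> * (norm (S e) / m))"
        using upper[of r] \<open>norm r \<le> \<eta> * norm e\<close> \<open>0 < M\<close> \<open>0 < \<eta>\<close>
        by (smt (verit) mult_left_mono)
    qed simp
    also have "\<dots> = (c / 2) * (norm (S e))\<^sup>2"
      using \<open>0 < M\<close> \<open>0 < m\<close> by (simp add: \<eta>_def power2_eq_square field_simps)
    finally have "inner (S e) (S r) \<le> (c / 2) * (norm (S e))\<^sup>2" .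
    moreover have "S (F y) = S (A e) + S r"
      by (simp add: r_def linear_add[OF S(1), symmetric])
    ultimately show ?thesis
      using dissipative[of e] by (simp add: e_def inner_add_right)
  qed
  with \<open>0 < \<rho>\<close> that show thesis by blast
qed

lemma local_exponential_stability:
  fixes F :: "'a::euclidean_space \<Rightarrow> 'a" and S :: "'a \<Rightarrow> 'b::euclidean_space"
  assumes deriv: "(F has_derivative A) (at ts)" and F0: "F ts = 0"
    and S: "linear S" "inj S"
    and "0 < c" and dissipative: "\<And>v. inner (S v) (S (A v)) \<le> - c * (norm (S v))\<^sup>2"
    and stable: "\<forall>e>0. \<exists>d>0. \<forall>x. ode_solution F x \<and> norm (x 0 - ts) < d \<longrightarrow>
                                  (\<forall>t\<ge>0. norm (x t - ts) < e)"
  obtains r C \<delta> where "0 < r" "0 < \<delta>"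
    and "\<And>x t. ode_solution F x \<Longrightarrow> norm (x 0 - ts) < r \<Longrightarrow> 0 \<le> t \<Longrightarrow>
           norm (x t - ts) \<le> C * norm (x 0 - ts) * exp (- \<delta> * t)"
proof -
  obtain \<rho> where "0 < \<rho>" and near: "\<And>y. norm (y - ts) < \<rho> \<Longrightarrow>
      inner (S (y - ts)) (S (F y)) \<le> - (c / 2) * (norm (S (y - ts)))\<^sup>2"
    using linearization_dissipative_near[OF deriv F0 S \<open>0 < c\<close> dissipative] by blast
  from stable \<open>0 < \<rho>\<close> obtain r where "0 < r"
    and stays: "\<forall>x. ode_solution F x \<and> norm (x 0 - ts) < r \<longrightarrow> (\<forall>t\<ge>0. norm (x t - ts) < \<rho>)"
    by blast
  have S_bl: "bounded_linear S"
    using S(1) by (simp add: linear_conv_bounded_linear)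
  obtain M where "0 < M" and upper: "\<And>v. norm (S v) \<le> M * norm v"
    using linear_bounded_pos[OF S(1)] by blast
  obtain m where "0 < m" and lower: "\<And>v. m * norm v \<le> norm (S v)"
    using linear_inj_bounded_below_pos[OF S] by blast
  have "norm (x t - ts) \<le> M / m * norm (x 0 - ts) * exp (- (c / 2) * t)"
    if x: "ode_solution F x" and "norm (x 0 - ts) < r" and "0 \<le> t" for x t
  proof -
    have "norm (S (x t - ts)) \<le> norm (S (x 0 - ts)) * exp (- (c / 2) * t)"
    proof (rule norm_le_exp_if_inner_derivative_le[where z = "\<lambda>u. S (x u - ts)" and z' = "\<lambda>u. S (F (x u))"])
      have "continuous_on {0..t} (\<lambda>u. x u - ts)"
        using continuous_on_subset[OF ode_solution_continuous_on[OF x], of "{0..t}"]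
        by (auto intro!: continuous_intros)
      then show "continuous_on {0..t} (\<lambda>u. S (x u - ts))"
        by (rule bounded_linear.continuous_on[OF S_bl])
    next
      fix u :: real assume "0 < u"
      have "((\<lambda>u. x u - ts) has_vector_derivative F (x u)) (at u)"
        using ode_solution_has_vector_derivative_at[OF x \<open>0 < u\<close>] by (auto intro!: derivative_eq_intros)
      then show "((\<lambda>u. S (x u - ts)) has_vector_derivative S (F (x u))) (at u)"
        by (rule bounded_linear.has_vector_derivative[OF S_bl])
      show "inner (S (x u - ts)) (S (F (x u))) \<le> - (c / 2) * (norm (S (x u - ts)))\<^sup>2"
        using near stays x \<open>norm (x 0 - ts) < r\<close> \<open>0 < u\<close> by simp
    qed fact
    then have "m * norm (x t - ts) \<le> M * norm (x 0 - ts) * exp (- (c / 2) * t)"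
      using lower[of "x t - ts"] upper[of "x 0 - ts"]
      by (smt (verit) exp_gt_zero mult_right_mono)
    then show ?thesis
      using \<open>0 < m\<close> by (simp add: field_simps)
  qed
  with \<open>0 < r\<close> \<open>0 < c\<close> show thesis
    by (intro that[of r "c / 2" "M / m"]) auto
qed

section \<open>Hurwitz matrices admit a quadratic Lyapunov function\<close>

(* Schur decomposition is available only for the index-free matrices of Jordan_Normal_Form;
   an enumeration h of the index type transports Cartesian vectors and matrices there. *)
definition vec_of_cart :: "(nat \<Rightarrow> 'n::finite) \<Rightarrow> 'a^'n \<Rightarrow> 'a vec" where
  "vec_of_cart h x = Matrix.vec CARD('n) (\<lambda>i. x $ h i)"

definition mat_of_cart :: "(nat \<Rightarrow> 'n::finite) \<Rightarrow> 'a^'n^'n \<Rightarrow> 'a mat" where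
  "mat_of_cart h M = Matrix.mat CARD('n) CARD('n) (\<lambda>(i, j). M $ h i $ h j)"

definition complexify :: "real^'n \<Rightarrow> complex^'n" where
  "complexify v = (\<chi> i. complex_of_real (v $ i))"

definition complexify_mat :: "real^'n^'n \<Rightarrow> complex^'n^'n" where
  "complexify_mat A = (\<chi> i j. complex_of_real (A $ i $ j))"

lemma complexify_matrix_vector_mult:
  "complexify (A *v v) = complexify_mat A *v complexify v"
  by (simp add: complexify_def complexify_mat_def matrix_vector_mult_def vec_eq_iff)

lemma mat_of_cart_carrier [simp]:
  "mat_of_cart (h :: nat \<Rightarrow> 'n::finite) M \<in> carrier_mat CARD('n) CARD('n)"
  by (simp add: mat_of_cart_def)

lemma vec_of_cart_carrier [simp]: "vec_of_cart (h :: nat \<Rightarrow> 'n::finite) x \<in> carrier_vec CARD('n)"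
  by (simp add: vec_of_cart_def)

lemma inner_complex_mult_self: "inner (x::complex) (b * x) = Re b * (cmod x)\<^sup>2"
  unfolding cmod_power2 inner_complex_def by (simp add: algebra_simps power2_eq_square)

lemma inner_row_le_of_diagonal_dominance:
  fixes \<beta> :: "nat \<Rightarrow> nat \<Rightarrow> complex" and u :: "nat \<Rightarrow> complex"
  assumes "i < n" "Re (\<beta> i i) \<le> - \<mu>" "0 \<le> \<eta>"
    and off: "\<And>m. m < n \<Longrightarrow> m \<noteq> i \<Longrightarrow> cmod (\<beta> i m) \<le> \<eta>"
  shows "inner (u i) (\<Sum>m<n. \<beta> i m * u m) \<le> - \<mu> * (cmod (u i))\<^sup>2 + \<eta> * cmod (u i) * (\<Sum>m<n. cmod (u m))"
proof -
  define rest where "rest = (\<Sum>m\<in>{..<n} - {i}. \<beta> i m * u m)"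
  have split: "(\<Sum>m<n. \<beta> i m * u m) = \<beta> i i * u i + rest"
    using \<open>i < n\<close> by (simp add: rest_def sum.remove)
  have "cmod rest \<le> (\<Sum>m\<in>{..<n} - {i}. \<eta> * cmod (u m))"
    unfolding rest_def using off
    by (intro order.trans[OF norm_sum] sum_mono) (auto simp: norm_mult intro: mult_right_mono)
  also have "\<dots> = \<eta> * (\<Sum>m\<in>{..<n} - {i}. cmod (u m))"
    by (simp add: sum_distrib_left)
  also have "\<dots> \<le> \<eta> * (\<Sum>m<n. cmod (u m))"
    using \<open>0 \<le> \<eta>\<close> by (intro mult_left_mono sum_mono2) auto
  finally have "inner (u i) rest \<le> \<eta> * cmod (u i) * (\<Sum>m<n. cmod (u m))"
    using norm_cauchy_schwarz[of "u i" rest]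
    by (smt (verit) mult.assoc mult.commute mult_left_mono norm_ge_zero)
  moreover have "inner (u i) (\<beta> i i * u i) \<le> - \<mu> * (cmod (u i))\<^sup>2"
    using mult_right_mono[OF assms(2), of "(cmod (u i))\<^sup>2"] by (simp add: inner_complex_mult_self)
  ultimately show ?thesis
    by (simp add: split inner_add_right)
qed

lemma sum_inner_le_of_diagonal_dominance:
  fixes \<beta> :: "nat \<Rightarrow> nat \<Rightarrow> complex" and u :: "nat \<Rightarrow> complex"
  assumes diag: "\<And>i. i < n \<Longrightarrow> Re (\<beta> i i) \<le> - \<mu>"
    and off: "\<And>i m. i < n \<Longrightarrow> m < n \<Longrightarrow> m \<noteq> i \<Longrightarrow> cmod (\<beta> i m) \<le> \<eta>"
    and "0 \<le> \<eta>" and small: "real n * \<eta> \<le> \<mu> / 2"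
  shows "(\<Sum>i<n. inner (u i) (\<Sum>m<n. \<beta> i m * u m)) \<le> - (\<mu> / 2) * (\<Sum>i<n. (cmod (u i))\<^sup>2)"
proof -
  define S1 where "S1 = (\<Sum>m<n. cmod (u m))"
  define S2 where "S2 = (\<Sum>i<n. (cmod (u i))\<^sup>2)"
  have "(\<Sum>i<n. inner (u i) (\<Sum>m<n. \<beta> i m * u m))
      \<le> (\<Sum>i<n. - \<mu> * (cmod (u i))\<^sup>2 + \<eta> * cmod (u i) * S1)"
    unfolding S1_def using diag off \<open>0 \<le> \<eta>\<close>
    by (intro sum_mono inner_row_le_of_diagonal_dominance) auto
  also have "\<dots> = - \<mu> * S2 + \<eta> * S1\<^sup>2"
  proof -
    have "(\<Sum>i<n. \<eta> * cmod (u i) * S1) = \<eta> * S1 * (\<Sum>i<n. cmod (u i))"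
      by (simp add: sum_distrib_left mult_ac)
    also have "\<dots> = \<eta> * S1\<^sup>2"
      by (simp add: S1_def power2_eq_square)
    moreover have "(\<Sum>i<n. - \<mu> * (cmod (u i))\<^sup>2) = - \<mu> * S2"
      by (simp add: S2_def sum_distrib_left)
    ultimately show ?thesis
      unfolding sum.distrib by linarith
  qed
  also have "\<dots> \<le> - \<mu> * S2 + (real n * \<eta>) * S2"
    using sum_squared_le_sum_of_squares[of "\<lambda>m. cmod (u m)" "{..<n}"] \<open>0 \<le> \<eta>\<close>
    by (simp add: S1_def S2_def mult_left_mono mult_ac)
  also have "\<dots> \<le> - (\<mu> / 2) * S2"
    using mult_right_mono[OF small, of S2] by (simp add: S2_def sum_nonneg)
  finally show ?thesis
    by (simp add: S2_def)
qed

(* For m < i the exponent m - i truncates to 0; this is harmless since B_im = 0 there. *)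
lemma upper_triangular_scaled_dissipative:
  fixes B :: "complex mat"
  assumes B: "B \<in> carrier_mat n n" "upper_triangular B" and "0 < n"
    and diag_neg: "\<And>i. i < n \<Longrightarrow> Re (B $$ (i, i)) < 0"
  obtains \<epsilon> \<mu> where "0 < \<epsilon>" "0 < \<mu>"
    and "\<And>u. (\<Sum>i<n. inner (u i) (\<Sum>m<n. B $$ (i, m) * of_real (\<epsilon> ^ (m - i)) * u m))
               \<le> - \<mu> * (\<Sum>i<n. (cmod (u i))\<^sup>2)"
proof -
  define \<mu> where "\<mu> = Min ((\<lambda>i. - Re (B $$ (i, i))) ` {..<n})"
  define M where "M = Max ((\<lambda>(i, m). cmod (B $$ (i, m))) ` ({..<n} \<times> {..<n}))"
  define \<epsilon> where "\<epsilon> = min 1 (\<mu> / (2 * (real n * M + 1)))"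
  have "0 < \<mu>"
    unfolding \<mu>_def using \<open>0 < n\<close> diag_neg by (subst Min_gr_iff) auto
  have diag: "Re (B $$ (i, i)) \<le> - \<mu>" if "i < n" for i
  proof -
    have "\<mu> \<le> - Re (B $$ (i, i))"
      unfolding \<mu>_def using that by (intro Min_le) auto
    then show ?thesis by linarith
  qed
  have entry_le: "cmod (B $$ (i, m)) \<le> M" if "i < n" "m < n" for i m
    unfolding M_def using that by (intro Max_ge) auto
  then have "0 \<le> M"
    using \<open>0 < n\<close> norm_ge_zero order_trans by blast
  then have "0 < real n * M + 1"
    by (simp add: add_nonneg_pos)
  then have "0 < \<mu> / (2 * (real n * M + 1))"
    using \<open>0 < \<mu>\<close> by simp
  then have "0 < \<epsilon>" "\<epsilon> \<le> 1"
    by (auto simp: \<epsilon>_def)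
  have "\<epsilon> * (real n * M + 1) \<le> \<mu> / (2 * (real n * M + 1)) * (real n * M + 1)"
    using \<open>0 < real n * M + 1\<close> by (intro mult_right_mono) (auto simp: \<epsilon>_def)
  also have "\<dots> = \<mu> / 2"
    using \<open>0 < real n * M + 1\<close> by (simp add: field_simps)
  finally have "\<epsilon> * (real n * M + 1) \<le> \<mu> / 2" .
  define \<beta> where "\<beta> i m = B $$ (i, m) * of_real (\<epsilon> ^ (m - i))" for i m
  have off: "cmod (\<beta> i m) \<le> \<epsilon> * M" if "i < n" "m < n" "m \<noteq> i" for i m
  proof (cases "m < i")
    case True
    then have "B $$ (i, m) = 0"
      using B that by auto
    then show ?thesis
      using \<open>0 < \<epsilon>\<close> \<open>0 \<le> M\<close> by (simp add: \<beta>_def)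
  next
    case False
    then have "\<epsilon> ^ (m - i) \<le> \<epsilon>"
      using that \<open>0 < \<epsilon>\<close> \<open>\<epsilon> \<le> 1\<close> power_decreasing[of 1 "m - i" \<epsilon>] by simp
    then show ?thesis
      using mult_mono[OF entry_le[OF that(1,2)] \<open>\<epsilon> ^ (m - i) \<le> \<epsilon>\<close>] \<open>0 < \<epsilon>\<close> \<open>0 \<le> M\<close>
      by (simp add: \<beta>_def norm_mult norm_power mult.commute)
  qed
  have "real n * (\<epsilon> * M) \<le> \<mu> / 2"
    using \<open>\<epsilon> * (real n * M + 1) \<le> \<mu> / 2\<close> \<open>0 < \<epsilon>\<close> by (simp add: algebra_simps)
  then have "(\<Sum>i<n. inner (u i) (\<Sum>m<n. \<beta> i m * u m)) \<le> - (\<mu> / 2) * (\<Sum>i<n. (cmod (u i))\<^sup>2)"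
    for u
    using \<open>0 < \<epsilon>\<close> \<open>0 \<le> M\<close> diag off
    by (intro sum_inner_le_of_diagonal_dominance) (auto simp: \<beta>_def)
  with \<open>0 < \<epsilon>\<close> \<open>0 < \<mu>\<close> show thesis
    by (intro that[of \<epsilon> "\<mu> / 2"]) (auto simp: \<beta>_def)
qed

lemma upper_triangular_row_scaling:
  fixes B :: "complex mat"
  assumes "upper_triangular B" "B \<in> carrier_mat n n" "i < n" "0 < \<epsilon>"
  shows "of_real ((1 / \<epsilon>) ^ i) * (\<Sum>m<n. B $$ (i, m) * y m)
       = (\<Sum>m<n. B $$ (i, m) * of_real (\<epsilon> ^ (m - i)) * (of_real ((1 / \<epsilon>) ^ m) * y m))"
  unfolding sum_distrib_left
proof (rule sum.cong)
  fix m assume "m \<in> {..<n}"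
  show "of_real ((1 / \<epsilon>) ^ i) * (B $$ (i, m) * y m)
      = B $$ (i, m) * of_real (\<epsilon> ^ (m - i)) * (of_real ((1 / \<epsilon>) ^ m) * y m)"
  proof (cases "m < i")
    case True
    then have "B $$ (i, m) = 0"
      using assms by auto
    then show ?thesis
      by simp
  next
    case False
    then have "\<epsilon> ^ m = \<epsilon> ^ (m - i) * \<epsilon> ^ i"
      by (simp flip: power_add)
    then have "(1 / \<epsilon>) ^ i = \<epsilon> ^ (m - i) * (1 / \<epsilon>) ^ m"
      using \<open>0 < \<epsilon>\<close> by (simp add: power_one_over field_simps)
    then show ?thesis
      by (simp add: mult_ac)
  qed
qed simp

lemma complexify_add: "complexify (v + w) = complexify v + complexify w"
  by (simp add: complexify_def Finite_Cartesian_Product.vec_eq_iff)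

lemma complexify_scaleR: "complexify (r *\<^sub>R v) = complex_of_real r *s complexify v"
  by (simp add: complexify_def Finite_Cartesian_Product.vec_eq_iff)

lemma complexify_eq_0_iff: "complexify v = 0 \<longleftrightarrow> v = 0"
  by (simp add: complexify_def Finite_Cartesian_Product.vec_eq_iff)

lemma vec_of_cart_add: "vec_of_cart h (x + y) = vec_of_cart h x + vec_of_cart h y"
  by (rule eq_vecI) (simp_all add: vec_of_cart_def)

lemma vec_of_cart_scale: "vec_of_cart h (c *s x) = c \<cdot>\<^sub>v vec_of_cart h x"
  by (rule eq_vecI) (simp_all add: vec_of_cart_def)

(* The coordinates eps^-i (Q v)_i: in them the Schur form B of A has entries B_im eps^(m-i),
   so for small eps its strictly upper triangular part is dominated by the diagonal. *)
definition scaled_coords :: "(nat \<Rightarrow> 'n::finite) \<Rightarrow> complex mat \<Rightarrow> real \<Rightarrow> real^'n \<Rightarrow> complex^'n" where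
  "scaled_coords h Q \<epsilon> v = (\<chi> k. of_real ((1 / \<epsilon>) ^ inv_into {0..<CARD('n)} h k) *
      vec_index (Q *\<^sub>v vec_of_cart h (complexify v)) (inv_into {0..<CARD('n)} h k))"

context
  fixes h :: "nat \<Rightarrow> 'n::finite"
  assumes h: "bij_betw h {0..<CARD('n)} UNIV"
begin

lemma sum_UNIV_reindex: "(\<Sum>k\<in>UNIV. f k) = (\<Sum>i<CARD('n). f (h i))"
  using sum.reindex_bij_betw[OF h, of f] by (simp add: atLeast0LessThan)

lemma vec_of_cart_inj:
  assumes "vec_of_cart h x = vec_of_cart h y"
  shows "x = y"
proof -
  have "x $ k = y $ k" for k
  proof -
    obtain i where "i < CARD('n)" "h i = k"
      using h by (metis UNIV_I atLeastLessThan_iff bij_betw_iff_bijections)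
    then show ?thesis
      using arg_cong[OF assms, of "\<lambda>v. vec_index v i"] by (simp add: vec_of_cart_def)
  qed
  then show ?thesis
    by (simp add: Finite_Cartesian_Product.vec_eq_iff)
qed

lemma vec_of_cart_surj:
  assumes "v \<in> carrier_vec CARD('n)"
  obtains x where "v = vec_of_cart h x"
proof
  show "v = vec_of_cart h (\<chi> k. vec_index v (inv_into {0..<CARD('n)} h k))"
    using assms bij_betw_inv_into_left[OF h] by (auto simp: vec_of_cart_def)
qed

lemma vec_of_cart_matrix_vector_mult:
  "vec_of_cart h (M *v x) = mat_of_cart h M *\<^sub>v vec_of_cart h x"
  by (rule eq_vecI) (simp_all add: vec_of_cart_def mat_of_cart_def matrix_vector_mult_def
      sum_UNIV_reindex scalar_prod_def atLeast0LessThan)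

lemma hurwitz_eigenvalue_Re_neg:
  assumes "hurwitz A" and "eigenvalue (mat_of_cart h (complexify_mat A)) b"
  shows "Re b < 0"
proof -
  let ?M = "complexify_mat A"
  obtain v where v: "v \<in> carrier_vec CARD('n)" "v \<noteq> 0\<^sub>v CARD('n)"
    and eigen: "mat_of_cart h ?M *\<^sub>v v = b \<cdot>\<^sub>v v"
    using assms(2) by (auto simp: eigenvalue_def eigenvector_def mat_of_cart_def)
  obtain w where w: "v = vec_of_cart h w"
    using vec_of_cart_surj[OF v(1)] .
  have "w \<noteq> 0"
    using v(2) by (auto simp: w vec_of_cart_def)
  have "vec_of_cart h (?M *v w) = vec_of_cart h (b *s w)"
    using eigen by (simp add: w vec_of_cart_matrix_vector_mult vec_of_cart_scale)
  then have "?M *v w = b *s w"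
    by (rule vec_of_cart_inj)
  moreover have "Finite_Cartesian_Product.mat b *v w = b *s w"
    by (simp add: Finite_Cartesian_Product.vec_eq_iff matrix_vector_mult_def
        Finite_Cartesian_Product.mat_def if_distrib if_distribR cong del: if_weak_cong)
  ultimately have "(Finite_Cartesian_Product.mat b - ?M) *v w = 0"
    by (simp add: matrix_vector_mult_diff_rdistrib)
  with \<open>w \<noteq> 0\<close> have "Determinants.det (Finite_Cartesian_Product.mat b - ?M) = 0"
    by (metis invertible_det_nz invertible_left_inverse matrix_left_invertible_ker)
  then show ?thesis
    using assms(1) unfolding hurwitz_def complexify_mat_def by blast
qed

lemma hurwitz_schur_triangularization:
  assumes "hurwitz A"
  obtains B P Q where "B \<in> carrier_mat CARD('n) CARD('n)" "P \<in> carrier_mat CARD('n) CARD('n)"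
    "Q \<in> carrier_mat CARD('n) CARD('n)" "upper_triangular B"
    "\<And>i. i < CARD('n) \<Longrightarrow> Re (B $$ (i, i)) < 0"
    "P * Q = 1\<^sub>m CARD('n)" "Q * mat_of_cart h (complexify_mat A) = B * Q"
proof -
  define M where "M = mat_of_cart h (complexify_mat A)"
  have M: "M \<in> carrier_mat CARD('n) CARD('n)"
    by (simp add: M_def mat_of_cart_def)
  obtain es where es: "char_poly M = (\<Prod>a\<leftarrow>es. [:- a, 1:])"
    using char_poly_factorized[OF M] by blast
  obtain B P Q where "schur_decomposition M es = (B, P, Q)"
    by (cases "schur_decomposition M es") auto
  from schur_decomposition[OF M es this] have "similar_mat_wit M B P Q"
    and "upper_triangular B" and diag: "diag_mat B = es" by auto
  then have B: "B \<in> carrier_mat CARD('n) CARD('n)" "P \<in> carrier_mat CARD('n) CARD('n)"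
      "Q \<in> carrier_mat CARD('n) CARD('n)"
    and "P * Q = 1\<^sub>m CARD('n)" "Q * P = 1\<^sub>m CARD('n)" "M = P * B * Q"
    using M unfolding similar_mat_wit_def Let_def by auto
  have "Q * M = Q * (P * (B * Q))"
    using B by (simp add: \<open>M = P * B * Q\<close>)
  also have "\<dots> = (Q * P) * (B * Q)"
    using B by (auto intro!: assoc_mult_mat[symmetric])
  also have "\<dots> = B * Q"
    using B by (simp add: \<open>Q * P = 1\<^sub>m CARD('n)\<close>)
  finally have "Q * M = B * Q" .
  have "Re (B $$ (i, i)) < 0" if "i < CARD('n)" for i
  proof -
    have "B $$ (i, i) \<in> set es"
      using that B by (auto simp: diag[symmetric] diag_mat_def)
    then have "poly (char_poly M) (B $$ (i, i)) = 0"
      unfolding es by (force simp: poly_prod_list prod_list_zero_iff)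
    then have "eigenvalue M (B $$ (i, i))"
      by (simp add: eigenvalue_root_char_poly[OF M])
    then show ?thesis
      using hurwitz_eigenvalue_Re_neg[OF assms] by (simp add: M_def)
  qed
  with B \<open>upper_triangular B\<close> \<open>P * Q = 1\<^sub>m CARD('n)\<close> \<open>Q * M = B * Q\<close> show thesis
    using that by (simp add: M_def)
qed

context
  fixes Q :: "complex mat"
  assumes Q: "Q \<in> carrier_mat CARD('n) CARD('n)"
begin

lemma scaled_coords_nth:
  "i < CARD('n) \<Longrightarrow>
     scaled_coords h Q \<epsilon> v $ h i = of_real ((1 / \<epsilon>) ^ i) * vec_index (Q *\<^sub>v vec_of_cart h (complexify v)) i"
  using h by (simp add: scaled_coords_def bij_betw_inv_into_left)

lemma linear_scaled_coords: "linear (scaled_coords h Q \<epsilon>)"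
proof -
  let ?y = "\<lambda>v. Q *\<^sub>v vec_of_cart h (complexify v)"
  have y_add: "?y (v + w) = ?y v + ?y w" for v w
    using Q by (simp add: complexify_add vec_of_cart_add mult_add_distrib_mat_vec[of _ "CARD('n)" "CARD('n)"])
  have y_scale: "?y (r *\<^sub>R v) = of_real r \<cdot>\<^sub>v ?y v" for r v
    using Q by (simp add: complexify_scaleR vec_of_cart_scale mult_mat_vec[of _ "CARD('n)" "CARD('n)"])
  have idx: "inv_into {0..<CARD('n)} h k < dim_row Q" for k
    using Q h by (metis UNIV_I atLeastLessThan_iff bij_betw_def carrier_matD(1) inv_into_into)
  show ?thesis
  proof (rule linearI)
    show "scaled_coords h Q \<epsilon> (v + w) = scaled_coords h Q \<epsilon> v + scaled_coords h Q \<epsilon> w" for v w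
      by (simp add: scaled_coords_def y_add Finite_Cartesian_Product.vec_eq_iff distrib_left
          index_add_vec idx)
    show "scaled_coords h Q \<epsilon> (r *\<^sub>R v) = r *\<^sub>R scaled_coords h Q \<epsilon> v" for r v
      by (simp add: scaled_coords_def y_scale Finite_Cartesian_Product.vec_eq_iff idx)
        (simp add: scaleR_conv_of_real)
  qed
qed

lemma inj_scaled_coords:
  assumes "P \<in> carrier_mat CARD('n) CARD('n)" "P * Q = 1\<^sub>m CARD('n)" "0 < \<epsilon>"
  shows "inj (scaled_coords h Q \<epsilon>)"
proof -
  let ?x = "\<lambda>v. vec_of_cart h (complexify v)"
  have "v = 0" if "scaled_coords h Q \<epsilon> v = 0" for v
  proof -
    have "vec_index (Q *\<^sub>v ?x v) i = 0" if "i < CARD('n)" for i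
      using scaled_coords_nth[OF that, of \<epsilon> v] \<open>scaled_coords h Q \<epsilon> v = 0\<close> \<open>0 < \<epsilon>\<close> by simp
    then have "Q *\<^sub>v ?x v = 0\<^sub>v CARD('n)"
      using Q by (intro eq_vecI) auto
    have "?x v = (P * Q) *\<^sub>v ?x v"
      using \<open>P * Q = 1\<^sub>m CARD('n)\<close> by simp
    also have "\<dots> = P *\<^sub>v (Q *\<^sub>v ?x v)"
      using assms(1) Q by simp
    also have "\<dots> = vec_of_cart h 0"
      using assms(1) \<open>Q *\<^sub>v ?x v = 0\<^sub>v CARD('n)\<close>
      by (intro eq_vecI) (auto simp: carrier_vecI vec_of_cart_def)
    finally have "complexify v = 0"
      by (rule vec_of_cart_inj)
    then show "v = 0"
      by (simp add: complexify_eq_0_iff)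
  qed
  then show ?thesis
    using linear_scaled_coords by (simp add: linear_injective_0)
qed

lemma scaled_coords_matrix_vector_mult:
  assumes "B \<in> carrier_mat CARD('n) CARD('n)" "upper_triangular B"
    and QA: "Q * mat_of_cart h (complexify_mat A) = B * Q" and "0 < \<epsilon>" "i < CARD('n)"
  shows "scaled_coords h Q \<epsilon> (A *v v) $ h i =
           (\<Sum>m<CARD('n). B $$ (i, m) * of_real (\<epsilon> ^ (m - i)) * scaled_coords h Q \<epsilon> v $ h m)"
proof -
  let ?x = "vec_of_cart h (complexify v)"
  have "Q *\<^sub>v vec_of_cart h (complexify (A *v v)) = Q *\<^sub>v (mat_of_cart h (complexify_mat A) *\<^sub>v ?x)"
    by (simp add: complexify_matrix_vector_mult vec_of_cart_matrix_vector_mult)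
  also have "\<dots> = (Q * mat_of_cart h (complexify_mat A)) *\<^sub>v ?x"
    by (rule assoc_mult_mat_vec[symmetric, OF Q mat_of_cart_carrier vec_of_cart_carrier])
  also have "\<dots> = B *\<^sub>v (Q *\<^sub>v ?x)"
    using assms(1) Q by (simp add: QA)
  finally have "scaled_coords h Q \<epsilon> (A *v v) $ h i
      = of_real ((1 / \<epsilon>) ^ i) * (\<Sum>m<CARD('n). B $$ (i, m) * vec_index (Q *\<^sub>v ?x) m)"
    using assms(1,5) Q by (simp add: scaled_coords_nth scalar_prod_def atLeast0LessThan)
  also have "\<dots> = (\<Sum>m<CARD('n). B $$ (i, m) * of_real (\<epsilon> ^ (m - i))
                     * (of_real ((1 / \<epsilon>) ^ m) * vec_index (Q *\<^sub>v ?x) m))"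
    by (rule upper_triangular_row_scaling[OF assms(2,1,5,4)])
  also have "\<dots> = (\<Sum>m<CARD('n). B $$ (i, m) * of_real (\<epsilon> ^ (m - i)) * scaled_coords h Q \<epsilon> v $ h m)"
    by (rule sum.cong) (simp_all add: scaled_coords_nth)
  finally show ?thesis .
qed

end

end

lemma hurwitz_quadratic_lyapunov:
  fixes A :: "real^'n^'n"
  assumes "hurwitz A"
  obtains S :: "real^'n \<Rightarrow> complex^'n" and c where "linear S" "inj S" "0 < c"
    and "\<And>v. inner (S v) (S (A *v v)) \<le> - c * (norm (S v))\<^sup>2"
proof -
  let ?n = "CARD('n)"
  obtain h :: "nat \<Rightarrow> 'n" where h: "bij_betw h {0..<?n} UNIV"
    using ex_bij_betw_nat_finite[of "UNIV :: 'n set"] by auto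
  obtain B P Q where B: "B \<in> carrier_mat ?n ?n" "P \<in> carrier_mat ?n ?n" "Q \<in> carrier_mat ?n ?n"
    and "upper_triangular B" and diag: "\<And>i. i < ?n \<Longrightarrow> Re (B $$ (i, i)) < 0"
    and "P * Q = 1\<^sub>m ?n" and QA: "Q * mat_of_cart h (complexify_mat A) = B * Q"
    using hurwitz_schur_triangularization[OF h assms] by blast
  obtain \<epsilon> \<mu> where "0 < \<epsilon>" "0 < \<mu>" and dissipative:
    "\<And>u. (\<Sum>i<?n. inner (u i) (\<Sum>m<?n. B $$ (i, m) * of_real (\<epsilon> ^ (m - i)) * u m))
            \<le> - \<mu> * (\<Sum>i<?n. (cmod (u i))\<^sup>2)"
    using upper_triangular_scaled_dissipative[OF B(1) \<open>upper_triangular B\<close> zero_less_card_finite diag]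
    by blast
  define S where "S = scaled_coords h Q \<epsilon>"
  have "inner (S v) (S (A *v v)) \<le> - \<mu> * (norm (S v))\<^sup>2" for v
  proof -
    have "inner (S v) (S (A *v v)) = (\<Sum>i<?n. inner (S v $ h i) (S (A *v v) $ h i))"
      unfolding inner_vec_def by (rule sum_UNIV_reindex[OF h])
    also have "\<dots> = (\<Sum>i<?n. inner (S v $ h i)
                        (\<Sum>m<?n. B $$ (i, m) * of_real (\<epsilon> ^ (m - i)) * S v $ h m))"
      unfolding S_def
      by (simp add: scaled_coords_matrix_vector_mult[OF h B(3,1) \<open>upper_triangular B\<close> QA \<open>0 < \<epsilon>\<close>])
    also have "\<dots> \<le> - \<mu> * (\<Sum>i<?n. (cmod (S v $ h i))\<^sup>2)"
      by (rule dissipative)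
    also have "(\<Sum>i<?n. (cmod (S v $ h i))\<^sup>2) = (norm (S v))\<^sup>2"
      unfolding power2_norm_eq_inner inner_vec_def sum_UNIV_reindex[OF h] by simp
    finally show ?thesis .
  qed
  moreover have "linear S" "inj S"
    unfolding S_def using linear_scaled_coords[OF h B(3)] inj_scaled_coords[OF h B(3,2)]
      \<open>P * Q = 1\<^sub>m ?n\<close> \<open>0 < \<epsilon>\<close> by auto
  ultimately show thesis
    using that \<open>0 < \<mu>\<close> by blast
qed

section \<open>Global exponential stability\<close>

(* After the time ln (C |x 0 - ts| / (R + 1)) / gamma the ultimate bound puts the solution
   into the ball of radius 2 R + 1, from which the entry time into the ball of radius r
   is uniform. *)
lemma ode_entry_time_logarithmic:
  fixes F :: "'a::euclidean_space \<Rightarrow> 'a"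
  assumes lip: "L-lipschitz_on UNIV F"
    and attractive: "\<And>x. ode_solution F x \<Longrightarrow> (x \<longlongrightarrow> ts) at_top"
    and "0 < r" and "0 \<le> R" "0 \<le> C" "0 < \<gamma>"
    and ultimate: "\<And>x t. ode_solution F x \<Longrightarrow> 0 \<le> t \<Longrightarrow>
                     norm (x t - ts) \<le> R + C * norm (x 0 - ts) * exp (- \<gamma> * t)"
  obtains K where "0 \<le> K" "\<And>x. ode_solution F x \<Longrightarrow> r \<le> norm (x 0 - ts) \<Longrightarrow>
                     \<exists>\<sigma>\<ge>0. norm (x \<sigma> - ts) < r \<and> exp (\<gamma> * \<sigma>) \<le> K * norm (x 0 - ts)"
proof -
  obtain T where entry: "\<And>x. ode_solution F x \<Longrightarrow> norm (x 0 - ts) \<le> 2 * R + 1 \<Longrightarrow>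
                              \<exists>s\<in>{0..T}. norm (x s - ts) < r"
    using ode_uniform_entry_time[OF lip attractive \<open>0 < r\<close>] by blast
  define K where "K = exp (\<gamma> * T) * (1 / r + C / (R + 1))"
  have "\<exists>\<sigma>\<ge>0. norm (x \<sigma> - ts) < r \<and> exp (\<gamma> * \<sigma>) \<le> K * norm (x 0 - ts)"
    if x: "ode_solution F x" and "r \<le> norm (x 0 - ts)" for x
  proof -
    define n0 where "n0 = norm (x 0 - ts)"
    define M where "M = max 1 (C * n0 / (R + 1))"
    define t1 where "t1 = ln M / \<gamma>"
    have "1 \<le> M" "C * n0 / (R + 1) \<le> M"
      by (simp_all add: M_def)
    have "C * n0 \<le> M * (R + 1)"
      using \<open>C * n0 / (R + 1) \<le> M\<close> \<open>0 \<le> R\<close> by (simp add: pos_divide_le_eq)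
    have "0 \<le> t1" and exp_t1: "exp (\<gamma> * t1) = M"
      using \<open>1 \<le> M\<close> \<open>0 < \<gamma>\<close> by (auto simp: t1_def)
    have "norm (x t1 - ts) \<le> R + C * n0 * exp (- \<gamma> * t1)"
      using ultimate[OF x \<open>0 \<le> t1\<close>] by (simp add: n0_def)
    also have "C * n0 * exp (- \<gamma> * t1) = C * n0 / M"
      using exp_t1 by (simp add: exp_minus field_simps)
    also have "\<dots> \<le> R + 1"
      using \<open>1 \<le> M\<close> \<open>C * n0 \<le> M * (R + 1)\<close> by (simp add: divide_le_eq mult.commute)
    finally obtain s where "s \<in> {0..T}" and s: "norm (x (s + t1) - ts) < r"
      using entry[OF ode_solution_shift[OF x \<open>0 \<le> t1\<close>]] by auto
    have "1 \<le> n0 / r" "0 \<le> n0 * (C / (R + 1))"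
      using \<open>r \<le> norm (x 0 - ts)\<close> \<open>0 < r\<close> \<open>0 \<le> R\<close> \<open>0 \<le> C\<close> by (simp_all add: n0_def)
    then have "M \<le> n0 * (1 / r + C / (R + 1))"
      unfolding M_def distrib_left by (simp add: max.bounded_iff mult.commute)
    have "exp (\<gamma> * (s + t1)) = exp (\<gamma> * s) * M"
      using exp_t1 by (simp add: distrib_left exp_add)
    also have "\<dots> \<le> exp (\<gamma> * T) * M"
      using \<open>s \<in> {0..T}\<close> \<open>0 < \<gamma>\<close> \<open>1 \<le> M\<close> by (intro mult_right_mono) auto
    also have "\<dots> \<le> exp (\<gamma> * T) * (n0 * (1 / r + C / (R + 1)))"
      using \<open>M \<le> n0 * (1 / r + C / (R + 1))\<close> by (intro mult_left_mono) auto
    finally show ?thesis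
      using s \<open>s \<in> {0..T}\<close> \<open>0 \<le> t1\<close>
      by (intro exI[of _ "s + t1"]) (simp add: K_def n0_def mult_ac)
  qed
  moreover have "0 \<le> K"
    using \<open>0 < r\<close> \<open>0 \<le> R\<close> \<open>0 \<le> C\<close> by (simp add: K_def)
  ultimately show thesis
    using that by blast
qed

lemma ode_bound_after_entry:
  fixes F :: "'a::real_normed_vector \<Rightarrow> 'a"
  assumes x: "ode_solution F x" and "0 \<le> \<sigma>" "norm (x \<sigma> - ts) < r"
    and "0 \<le> C" "0 \<le> R" "0 \<le> C'" "\<delta> \<le> \<gamma>" "0 \<le> \<delta>"
    and local: "\<And>x t. ode_solution F x \<Longrightarrow> norm (x 0 - ts) < r \<Longrightarrow> 0 \<le> t \<Longrightarrow>
                  norm (x t - ts) \<le> C * norm (x 0 - ts) * exp (- \<delta> * t)"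
    and ultimate: "\<And>x t. ode_solution F x \<Longrightarrow> 0 \<le> t \<Longrightarrow>
                     norm (x t - ts) \<le> R + C' * norm (x 0 - ts) * exp (- \<gamma> * t)"
    and "0 \<le> t"
  shows "norm (x t - ts) \<le> ((C * r + R) * exp (\<delta> * \<sigma>) + C' * norm (x 0 - ts)) * exp (- \<delta> * t)"
proof (cases "\<sigma> \<le> t")
  case True
  have "norm (x t - ts) = norm (x ((t - \<sigma>) + \<sigma>) - ts)"
    by simp
  also have "\<dots> \<le> C * norm (x \<sigma> - ts) * exp (- \<delta> * (t - \<sigma>))"
    using local[OF ode_solution_shift[OF x \<open>0 \<le> \<sigma>\<close>], of "t - \<sigma>"] assms(3) True by simp
  also have "\<dots> \<le> C * r * exp (- \<delta> * (t - \<sigma>))"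
    using assms(3,4) by (intro mult_right_mono mult_left_mono) auto
  also have "\<dots> = C * r * exp (\<delta> * \<sigma>) * exp (- \<delta> * t)"
    by (simp add: algebra_simps flip: exp_add)
  also have "\<dots> \<le> ((C * r + R) * exp (\<delta> * \<sigma>) + C' * norm (x 0 - ts)) * exp (- \<delta> * t)"
    using \<open>0 \<le> R\<close> \<open>0 \<le> C'\<close> by (intro mult_right_mono) (auto simp: distrib_right)
  finally show ?thesis .
next
  case False
  have "1 \<le> exp (\<delta> * \<sigma>) * exp (- \<delta> * t)"
    using False \<open>0 \<le> \<delta>\<close> by (simp add: mult_left_mono flip: exp_add)
  then have "R \<le> R * exp (\<delta> * \<sigma>) * exp (- \<delta> * t)"
    using \<open>0 \<le> R\<close> mult_left_mono[of 1 _ R] by (simp add: mult.assoc)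
  moreover have "C' * norm (x 0 - ts) * exp (- \<gamma> * t) \<le> C' * norm (x 0 - ts) * exp (- \<delta> * t)"
    using \<open>0 \<le> C'\<close> \<open>\<delta> \<le> \<gamma>\<close> \<open>0 \<le> t\<close> by (intro mult_left_mono) (auto intro: mult_right_mono)
  moreover have "0 \<le> r"
    using assms(3) norm_ge_zero[of "x \<sigma> - ts"] by linarith
  then have "0 \<le> C * r * exp (\<delta> * \<sigma>) * exp (- \<delta> * t)"
    using \<open>0 \<le> C\<close> by simp
  ultimately show ?thesis
    using ultimate[OF x \<open>0 \<le> t\<close>] by (simp add: algebra_simps)
qed

lemma ode_bound_far_start:
  fixes F :: "'a::real_normed_vector \<Rightarrow> 'a"
  assumes x: "ode_solution F x" and "0 \<le> \<sigma>" "norm (x \<sigma> - ts) < r"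
    and entry: "exp (\<gamma> * \<sigma>) \<le> K * norm (x 0 - ts)"
    and "0 \<le> C" "0 \<le> R" "0 \<le> C'" "\<delta> \<le> \<gamma>" "0 \<le> \<delta>"
    and local: "\<And>x t. ode_solution F x \<Longrightarrow> norm (x 0 - ts) < r \<Longrightarrow> 0 \<le> t \<Longrightarrow>
                  norm (x t - ts) \<le> C * norm (x 0 - ts) * exp (- \<delta> * t)"
    and ultimate: "\<And>x t. ode_solution F x \<Longrightarrow> 0 \<le> t \<Longrightarrow>
                     norm (x t - ts) \<le> R + C' * norm (x 0 - ts) * exp (- \<gamma> * t)"
    and "0 \<le> t"
  shows "norm (x t - ts) \<le> ((C * r + R) * K + C') * norm (x 0 - ts) * exp (- \<delta> * t)"
proof -
  have "0 \<le> r"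
    using assms(3) norm_ge_zero[of "x \<sigma> - ts"] by linarith
  have "exp (\<delta> * \<sigma>) \<le> exp (\<gamma> * \<sigma>)"
    using \<open>0 \<le> \<sigma>\<close> \<open>\<delta> \<le> \<gamma>\<close> by (simp add: mult_right_mono)
  also note entry
  finally have "(C * r + R) * exp (\<delta> * \<sigma>) \<le> (C * r + R) * (K * norm (x 0 - ts))"
    using \<open>0 \<le> r\<close> \<open>0 \<le> C\<close> \<open>0 \<le> R\<close> by (intro mult_left_mono) auto
  then have "((C * r + R) * exp (\<delta> * \<sigma>) + C' * norm (x 0 - ts)) * exp (- \<delta> * t)
      \<le> ((C * r + R) * K + C') * norm (x 0 - ts) * exp (- \<delta> * t)"
    by (intro mult_right_mono) (auto simp: algebra_simps)
  with ode_bound_after_entry[OF x \<open>0 \<le> \<sigma>\<close> assms(3) \<open>0 \<le> C\<close> \<open>0 \<le> R\<close> \<open>0 \<le> C'\<close> \<open>\<delta> \<le> \<gamma>\<close>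
      \<open>0 \<le> \<delta>\<close> local ultimate \<open>0 \<le> t\<close>]
  show ?thesis
    by linarith
qed

lemma exponential_stability_of_local_and_ultimate:
  fixes F :: "'a::euclidean_space \<Rightarrow> 'a"
  assumes lip: "L-lipschitz_on UNIV F"
    and attractive: "\<And>x. ode_solution F x \<Longrightarrow> (x \<longlongrightarrow> ts) at_top"
    and "0 < r" "0 < \<delta>"
    and local: "\<And>x t. ode_solution F x \<Longrightarrow> norm (x 0 - ts) < r \<Longrightarrow> 0 \<le> t \<Longrightarrow>
                  norm (x t - ts) \<le> C * norm (x 0 - ts) * exp (- \<delta> * t)"
    and "0 \<le> R" "0 \<le> C'" "0 < \<gamma>"
    and ultimate: "\<And>x t. ode_solution F x \<Longrightarrow> 0 \<le> t \<Longrightarrow>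
                     norm (x t - ts) \<le> R + C' * norm (x 0 - ts) * exp (- \<gamma> * t)"
  shows "\<exists>b>0. \<exists>\<delta>>0. \<forall>x. ode_solution F x \<longrightarrow>
           (\<forall>t\<ge>0. norm (x t - ts) \<le> b * norm (x 0 - ts) * exp (- \<delta> * t))"
proof -
  obtain K where "0 \<le> K" and entry: "\<And>x. ode_solution F x \<Longrightarrow> r \<le> norm (x 0 - ts) \<Longrightarrow>
      \<exists>\<sigma>\<ge>0. norm (x \<sigma> - ts) < r \<and> exp (\<gamma> * \<sigma>) \<le> K * norm (x 0 - ts)"
    using ode_entry_time_logarithmic[OF lip attractive \<open>0 < r\<close> \<open>0 \<le> R\<close> \<open>0 \<le> C'\<close> \<open>0 < \<gamma>\<close> ultimate]
    by blast
  define \<delta>' where "\<delta>' = min \<delta> \<gamma>"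
  define C1 where "C1 = max C 1"
  define b where "b = (C1 * r + R) * K + C' + C1"
  have "0 < \<delta>'" "\<delta>' \<le> \<gamma>" "1 \<le> C1"
    using \<open>0 < \<delta>\<close> \<open>0 < \<gamma>\<close> by (auto simp: \<delta>'_def C1_def)
  have local': "norm (x t - ts) \<le> C1 * norm (x 0 - ts) * exp (- \<delta>' * t)"
    if "ode_solution F x" "norm (x 0 - ts) < r" "0 \<le> t" for x t
  proof -
    have "C * norm (x 0 - ts) * exp (- \<delta> * t) \<le> C1 * norm (x 0 - ts) * exp (- \<delta>' * t)"
      using \<open>0 \<le> t\<close> by (intro mult_mono) (auto simp: C1_def \<delta>'_def intro: mult_right_mono)
    then show ?thesis
      using local[OF that] by linarith
  qed
  have "norm (x t - ts) \<le> b * norm (x 0 - ts) * exp (- \<delta>' * t)"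
    if x: "ode_solution F x" and "0 \<le> t" for x t
  proof (cases "norm (x 0 - ts) < r")
    case True
    have "C1 * norm (x 0 - ts) * exp (- \<delta>' * t) \<le> b * norm (x 0 - ts) * exp (- \<delta>' * t)"
      using \<open>0 \<le> K\<close> \<open>0 < r\<close> \<open>0 \<le> R\<close> \<open>0 \<le> C'\<close> \<open>1 \<le> C1\<close> by (intro mult_right_mono) (auto simp: b_def)
    then show ?thesis
      using local'[OF x True \<open>0 \<le> t\<close>] by linarith
  next
    case False
    then obtain \<sigma> where "0 \<le> \<sigma>" "norm (x \<sigma> - ts) < r" "exp (\<gamma> * \<sigma>) \<le> K * norm (x 0 - ts)"
      using entry[OF x] by force
    from ode_bound_far_start[OF x this _ \<open>0 \<le> R\<close> \<open>0 \<le> C'\<close> \<open>\<delta>' \<le> \<gamma>\<close> _ local' ultimate \<open>0 \<le> t\<close>]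
    have "norm (x t - ts) \<le> ((C1 * r + R) * K + C') * norm (x 0 - ts) * exp (- \<delta>' * t)"
      using \<open>1 \<le> C1\<close> \<open>0 < \<delta>'\<close> by simp
    also have "\<dots> \<le> b * norm (x 0 - ts) * exp (- \<delta>' * t)"
      using \<open>1 \<le> C1\<close> by (intro mult_right_mono) (auto simp: b_def)
    finally show ?thesis .
  qed
  moreover have "0 < b"
    using \<open>0 \<le> K\<close> \<open>0 < r\<close> \<open>0 \<le> R\<close> \<open>0 \<le> C'\<close> \<open>1 \<le> C1\<close> unfolding b_def
    by (intro add_nonneg_pos add_nonneg_nonneg mult_nonneg_nonneg) auto
  ultimately show ?thesis
    using \<open>0 < \<delta>'\<close> by blast
qed

lemma lipschitz_on_UNIV_abs:
  assumes "\<forall>x y. norm (f y - f x) \<le> L * norm (y - x)"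
  shows "\<bar>L\<bar>-lipschitz_on UNIV f"
proof (rule lipschitz_onI)
  fix x y
  have "norm (f x - f y) \<le> L * norm (x - y)"
    using assms by blast
  then show "dist (f x) (f y) \<le> \<bar>L\<bar> * dist x y"
    by (metis abs_ge_self dist_norm mult_right_mono norm_ge_zero order_trans)
qed simp

lemma le_linear_growth_if_lipschitz:
  fixes V :: "'a::real_normed_vector \<Rightarrow> real"
  assumes "\<forall>x y. \<bar>V y - V x\<bar> \<le> L * norm (y - x)"
  shows "V x \<le> V 0 + max L 1 * norm x"
proof -
  have "V x - V 0 \<le> L * norm x"
    using assms[rule_format, of 0 x] by simp
  also have "\<dots> \<le> max L 1 * norm x"
    by (intro mult_right_mono) auto
  finally show ?thesis
    by simp
qed

theorem proposition2p8:
  fixes w ph :: "real^'K" and G0 :: "real^'K \<Rightarrow> real^'m"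
    and P :: "(complex^'K) measure"
    and f :: "real^'d \<Rightarrow> real^'m \<Rightarrow> real^'d" and fbar :: "real^'d \<Rightarrow> real^'d"
    and Abar :: "real^'d \<Rightarrow> real^'d^'d"
    and V :: "real^'d \<Rightarrow> real" and L_f L_V \<delta>0 \<delta>1 T :: real and \<theta>s :: "real^'d"
  assumes w_pos: "\<forall>i. w$i > 0"
    and P_unif: "uniform_on_orbit w ph P"
    and G0_taylor: "abs_summable_taylor G0"
    and fbar_eq: "\<forall>\<theta>. fbar \<theta> = (\<integral>z. f \<theta> (probe G0 z) \<partial>P)"
    and fbar_deriv: "\<forall>\<theta>. (fbar has_derivative (\<lambda>h. Abar \<theta> *v h)) (at \<theta>)"
    and Abar_cont: "continuous_on UNIV Abar"
    and A1_fbar: "\<forall>\<theta> \<theta>'. norm (fbar \<theta>' - fbar \<theta>) \<le> L_f * norm (\<theta>' - \<theta>)"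
    and A1_f: "\<forall>\<theta> \<theta>' \<xi> \<xi>'. norm (f \<theta>' \<xi> - f \<theta> \<xi>) + norm (f \<theta> \<xi>' - f \<theta> \<xi>)
                  \<le> L_f * (norm (\<theta>' - \<theta>) + norm (\<xi>' - \<xi>))"
    and V4_nonneg: "\<forall>\<theta>. V \<theta> \<ge> 0"
    and V4_lip: "\<forall>\<theta> \<theta>'. \<bar>V \<theta>' - V \<theta>\<bar> \<le> L_V * norm (\<theta>' - \<theta>)"
    and V4_pos: "\<delta>0 > 0" "\<delta>1 > 0" "T > 0"
    and V4_coercive: "\<forall>\<theta>. norm \<theta> \<ge> 1 / \<delta>0 \<longrightarrow> V \<theta> \<ge> norm \<theta>"
    and V4_drift: "\<forall>x \<tau>. ode_solution fbar x \<and> \<tau> \<ge> 0 \<and> norm (x \<tau>) > 1 / \<delta>1 \<longrightarrow>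
                      V (x (\<tau> + T)) - V (x \<tau>) \<le> - \<delta>1 * norm (x \<tau>)"
    and A4_bounded: "\<exists>\<alpha>0>0. \<exists>B_u. \<forall>\<alpha>. 0 < \<alpha> \<and> \<alpha> \<le> \<alpha>0 \<longrightarrow>
                      (\<forall>z\<in>clock_orbit w ph. \<forall>\<Theta>.
                         nonauto_solution (\<lambda>t \<theta>. \<alpha> *\<^sub>R f \<theta> (probe G0 (clock_flow w z t))) \<Theta>
                         \<longrightarrow> (\<forall>\<^sub>F t in at_top. norm (\<Theta> t) \<le> B_u))"
    and A4_equil: "fbar \<theta>s = 0" "\<forall>\<theta>. fbar \<theta> = 0 \<longrightarrow> \<theta> = \<theta>s"
    and A4_GAS: "globally_asymptotically_stable fbar \<theta>s"
    and A4_hurwitz: "hurwitz (Abar \<theta>s)"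
  shows "\<exists>b>0. \<exists>\<delta>>0. \<forall>x. ode_solution fbar x \<longrightarrow>
           (\<forall>t\<ge>0. norm (x t - \<theta>s) \<le> b * norm (x 0 - \<theta>s) * exp (- \<delta> * t))"
proof -
  have lip: "\<bar>L_f\<bar>-lipschitz_on UNIV fbar"
    using A1_fbar by (rule lipschitz_on_UNIV_abs)
  have stable: "\<forall>e>0. \<exists>d>0. \<forall>x. ode_solution fbar x \<and> norm (x 0 - \<theta>s) < d \<longrightarrow>
                                  (\<forall>t\<ge>0. norm (x t - \<theta>s) < e)"
    and attractive: "\<And>x. ode_solution fbar x \<Longrightarrow> (x \<longlongrightarrow> \<theta>s) at_top"
    using A4_GAS unfolding globally_asymptotically_stable_def by auto
  obtain S :: "real^'d \<Rightarrow> complex^'d" and c where S: "linear S" "inj S" and "0 < c"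
    and dissipative: "\<And>v. inner (S v) (S (Abar \<theta>s *v v)) \<le> - c * (norm (S v))\<^sup>2"
    by (rule hurwitz_quadratic_lyapunov[OF A4_hurwitz]) (rule that)
  obtain r C \<delta> where "0 < r" "0 < \<delta>" and local:
    "\<And>x t. ode_solution fbar x \<Longrightarrow> norm (x 0 - \<theta>s) < r \<Longrightarrow> 0 \<le> t \<Longrightarrow>
       norm (x t - \<theta>s) \<le> C * norm (x 0 - \<theta>s) * exp (- \<delta> * t)"
    by (rule local_exponential_stability[OF fbar_deriv[rule_format] A4_equil(1) S \<open>0 < c\<close>
          dissipative stable]) (rule that)
  have "0 < max L_V 1"
    by simp
  have drift: "\<And>x \<tau>. ode_solution fbar x \<Longrightarrow> 0 \<le> \<tau> \<Longrightarrow> 1 / \<delta>1 < norm (x \<tau>) \<Longrightarrow>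
                  V (x (\<tau> + T)) - V (x \<tau>) \<le> - \<delta>1 * norm (x \<tau>)"
    using V4_drift by blast
  obtain R C' \<gamma> where "0 \<le> R" "0 \<le> C'" "0 < \<gamma>" and ultimate:
    "\<And>x t. ode_solution fbar x \<Longrightarrow> 0 \<le> t \<Longrightarrow>
       norm (x t - \<theta>s) \<le> R + C' * norm (x 0 - \<theta>s) * exp (- \<gamma> * t)"
    by (rule drift_ultimate_bound[OF lip A4_equil(1) V4_nonneg[rule_format]
          le_linear_growth_if_lipschitz[OF V4_lip] \<open>0 < max L_V 1\<close>
          V4_pos V4_coercive[rule_format] drift]) (assumption | rule that)+
  show ?thesis
    by (rule exponential_stability_of_local_and_ultimate[OF lip attractive \<open>0 < r\<close> \<open>0 < \<delta>\<close> local
          \<open>0 \<le> R\<close> \<open>0 \<le> C'\<close> \<open>0 < \<gamma>\<close> ultimate])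
qed

end
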